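(* For every $n\ge 3$ and every field $\mathrm{k}$ of characteristic zero, the pre-WDVV ring $R_n$ is a Koszul algebra.
   Context: A stable $2$-partition of $\{1,\dots,n\}$ is an unordered partition $\sigma=S_1/S_2$ of $\{1,\dots,n\}$ into two blocks with $|S_1|,|S_2|\ge 2$; $P_n$ denotes the set of these. For $\sigma=S_1/S_2$, $\tau=T_1/T_2$ in $P_n$, $a(\sigma,\tau)$ is the number of nonempty pairwise distinct sets among $S_i\cap T_j$, $1\le i,j\le 2$. The pre-WDVV ring is the standard graded algebra $R_n=\mathrm{k}[x_\sigma:\sigma\in P_n]/J_n$, where $J_n$ is the ideal generated by all products $x_\sigma x_\tau$ with $a(\sigma,\tau)=4$. *)

theory Defs
  imports Main "HOL-Library.Poly_Mapping"
begin

type_synonym ('v, 'k) mpoly = "(('v \<Rightarrow>\<^sub>0 nat) \<Rightarrow>\<^sub>0 'k)"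

definition var :: "'v \<Rightarrow> ('v, 'k::comm_ring_1) mpoly" where
  "var v = Poly_Mapping.single (Poly_Mapping.single v 1) 1"

definition poly_over :: "'v set \<Rightarrow> ('v, 'k::comm_ring_1) mpoly \<Rightarrow> bool" where
  "poly_over V p \<longleftrightarrow> (\<forall>m \<in> Poly_Mapping.keys p. Poly_Mapping.keys m \<subseteq> V)"

definition homog :: "nat \<Rightarrow> ('v, 'k::comm_ring_1) mpoly \<Rightarrow> bool" where
  "homog d p \<longleftrightarrow> (\<forall>m \<in> Poly_Mapping.keys p. (\<Sum>v\<in>Poly_Mapping.keys m. Poly_Mapping.lookup m v) = d)"

definition gen_ideal :: "'v set \<Rightarrow> ('v, 'k::comm_ring_1) mpoly set \<Rightarrow> ('v, 'k) mpoly set" where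
  "gen_ideal V G = {p. \<exists>c. (\<forall>g\<in>G. poly_over V (c g)) \<and> p = (\<Sum>g\<in>G. c g * g)}"

text \<open>R is Koszul iff the residue field k = R/R_+ has a linear graded free resolution
  ... -> R(-2)^(b 2) -> R(-1)^(b 1) -> R^(b 0) = R -> k -> 0 ,
  i.e. all differentials are matrices of linear forms.  Modules over R are written as
  modules over the polynomial ring modulo J: the differential M i (entries M i r c,
  r < b (i-1), c < b i) is given by linear forms of the polynomial ring, and
  equalities in R^b are equalities modulo J componentwise.\<close>
definition koszul_quotient :: "'v set \<Rightarrow> ('v, 'k::comm_ring_1) mpoly set \<Rightarrow> bool" where
  "koszul_quotient V J \<longleftrightarrow>
    (\<exists>(b :: nat \<Rightarrow> nat) (M :: nat \<Rightarrow> nat \<Rightarrow> nat \<Rightarrow> ('v, 'k) mpoly).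
       b 0 = 1 \<and>
       \<comment> \<open>differentials are homogeneous of degree 0 between R(-i)^(b i) and R(-(i-1))^(b (i-1))\<close>
       (\<forall>i\<ge>1. \<forall>r<b (i - 1). \<forall>c<b i. poly_over V (M i r c) \<and> homog 1 (M i r c)) \<and>
       \<comment> \<open>exactness at R^(b 0): image of d_1 is the kernel R_+ of the augmentation R -> k\<close>
       (\<forall>p. poly_over V p \<longrightarrow>
          (p \<in> gen_ideal V (var ` V) \<longleftrightarrow>
           (\<exists>u. (\<forall>c<b 1. poly_over V (u c)) \<and> p - (\<Sum>c<b 1. M 1 0 c * u c) \<in> J))) \<and>
       \<comment> \<open>d_i o d_(i+1) = 0 in R\<close>
       (\<forall>i\<ge>1. \<forall>r<b (i - 1). \<forall>c<b (i + 1).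
          (\<Sum>j<b i. M i r j * M (i + 1) j c) \<in> J) \<and>
       \<comment> \<open>exactness at R^(b i), i >= 1: ker d_i = im d_(i+1)\<close>
       (\<forall>i\<ge>1. \<forall>u. (\<forall>j<b i. poly_over V (u j)) \<and>
              (\<forall>r<b (i - 1). (\<Sum>j<b i. M i r j * u j) \<in> J) \<longrightarrow>
          (\<exists>w. (\<forall>c<b (i + 1). poly_over V (w c)) \<and>
               (\<forall>j<b i. u j - (\<Sum>c<b (i + 1). M (i + 1) j c * w c) \<in> J))))"

text \<open>An unordered partition S1/S2 is represented as the set {S1, S2}.\<close>
definition P :: "nat \<Rightarrow> nat set set set" where
  "P n = {{S1, S2} | S1 S2. S1 \<union> S2 = {1..n} \<and> S1 \<inter> S2 = {} \<and> card S1 \<ge> 2 \<and> card S2 \<ge> 2}"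

definition a :: "nat set set \<Rightarrow> nat set set \<Rightarrow> nat" where
  "a \<sigma> \<tau> = card ({S \<inter> T | S T. S \<in> \<sigma> \<and> T \<in> \<tau>} - {{}})"

definition J :: "nat \<Rightarrow> (nat set set, 'k::comm_ring_1) mpoly set" where
  "J n = gen_ideal (P n) {var \<sigma> * var \<tau> | \<sigma> \<tau>. \<sigma> \<in> P n \<and> \<tau> \<in> P n \<and> a \<sigma> \<tau> = 4}"

definition preWDVV_koszul :: "'k::comm_ring_1 itself \<Rightarrow> nat \<Rightarrow> bool" where
  "preWDVV_koszul _ n \<longleftrightarrow> koszul_quotient (P n) (J n :: (nat set set, 'k) mpoly set)"

end

theory Submission
  imports Defs
begin

text \<open>\<open>J\<^sub>n\<close> is generated by quadratic monomials, and every quotient \<open>R = S/J\<close> of a polynomial ring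
  \<open>S = k[x\<^sub>v : v \<in> V]\<close> by quadratic monomials \<open>x\<^sub>u x\<^sub>v\<close> is Koszul (Froberg).
  For \<open>T \<subseteq> V\<close> let \<open>I\<^sub>T = (x\<^sub>t : t \<in> T) + J\<close>. For \<open>v \<notin> T\<close> the colon ideal \<open>I\<^sub>T : x\<^sub>v\<close> is again of
  this form, namely \<open>I\<^bsub>T \<union> N(v)\<^esub>\<close> with \<open>N(v)\<close> the neighbours of \<open>v\<close> in the graph of \<open>J\<close>. So if \<open>v\<close>
  is the last element of \<open>T\<close> (in a fixed order), the exact sequence
  \<open>0 \<rightarrow> R/I\<^bsub>T - {v} \<union> N(v)\<^esub>(-1) \<rightarrow> R/I\<^bsub>T - {v}\<^esub> \<rightarrow> R/I\<^sub>T \<rightarrow> 0\<close> (the first map is multiplication by \<open>x\<^sub>v\<close>)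
  exhibits a resolution of \<open>R/I\<^sub>T\<close> as the mapping cone of a chain map lifting \<open>x\<^sub>v\<close> between
  resolutions of the two smaller quotients. By induction on the homological degree and on \<open>T\<close>,
  all these iterated cones are linear resolutions: the chain maps can be chosen linear because
  the relevant cycles are homogeneous and \<open>J\<close> is a homogeneous ideal. For \<open>T = V\<close> this is a linear
  resolution of \<open>k = R/I\<^sub>V\<close>.\<close>

lemma keys_add_nat: "Poly_Mapping.keys (m1 + m2) = Poly_Mapping.keys m1 \<union> Poly_Mapping.keys (m2 :: 'a \<Rightarrow>\<^sub>0 nat)"
  by (auto simp: in_keys_iff lookup_add)

lemma poly_over_zero [simp]: "poly_over V 0"
  by (simp add: poly_over_def)

lemma poly_over_one [simp]: "poly_over V 1"
  by (simp add: poly_over_def)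

lemma poly_over_add [intro]: "poly_over V p \<Longrightarrow> poly_over V q \<Longrightarrow> poly_over V (p + q)"
  unfolding poly_over_def by (metis (no_types) UnE keys_add subsetD)

lemma poly_over_uminus [intro]: "poly_over V p \<Longrightarrow> poly_over V (- p)"
  by (simp add: poly_over_def)

lemma poly_over_diff [intro]: "poly_over V p \<Longrightarrow> poly_over V q \<Longrightarrow> poly_over V (p - q)"
  unfolding poly_over_def by (metis (no_types) UnE keys_diff subsetD)

lemma poly_over_mult [intro]: "poly_over V p \<Longrightarrow> poly_over V q \<Longrightarrow> poly_over V (p * q)"
  unfolding poly_over_def using keys_mult by (fastforce simp: keys_add_nat)

lemma poly_over_sum [intro]: "(\<And>i. i \<in> S \<Longrightarrow> poly_over V (f i)) \<Longrightarrow> poly_over V (sum f S)"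
  by (induction S rule: infinite_finite_induct) auto

lemma poly_over_single [intro]: "Poly_Mapping.keys m \<subseteq> V \<Longrightarrow> poly_over V (Poly_Mapping.single m c)"
  by (simp add: poly_over_def)

lemma poly_over_var [intro]: "v \<in> V \<Longrightarrow> poly_over V (var v)"
  by (simp add: var_def poly_over_def)

lemma inj_var: "inj (var :: 'v \<Rightarrow> ('v, 'k::comm_ring_1) mpoly)"
proof
  fix x y assume "(var x :: ('v, 'k) mpoly) = var y"
  then have "Poly_Mapping.lookup (var x :: ('v, 'k) mpoly) (Poly_Mapping.single x 1)
      = Poly_Mapping.lookup (var y :: ('v, 'k) mpoly) (Poly_Mapping.single x 1)" by simp
  then have "Poly_Mapping.single y (1::nat) = Poly_Mapping.single x 1"
    by (simp add: var_def lookup_single when_def split: if_splits)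
  then show "x = y" by (metis lookup_single_eq lookup_single_not_eq one_neq_zero)
qed

definition monom_degree :: "('v \<Rightarrow>\<^sub>0 nat) \<Rightarrow> nat" where
  "monom_degree m = (\<Sum>v\<in>Poly_Mapping.keys m. Poly_Mapping.lookup m v)"

lemma monom_degree_add [simp]: "monom_degree (m1 + m2) = monom_degree m1 + monom_degree m2"
  unfolding monom_degree_def by (rule setsum_keys_plus_distrib) simp_all

lemma monom_degree_single [simp]: "monom_degree (Poly_Mapping.single v k) = k"
  by (simp add: monom_degree_def)

lemma homog_iff_monom_degree: "homog d p \<longleftrightarrow> (\<forall>m\<in>Poly_Mapping.keys p. monom_degree m = d)"
  by (simp add: homog_def monom_degree_def)

lemma homog_zero [simp]: "homog d 0"
  by (simp add: homog_iff_monom_degree)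

lemma homog_add [intro]: "homog d p \<Longrightarrow> homog d q \<Longrightarrow> homog d (p + q)"
  unfolding homog_iff_monom_degree by (metis (no_types) UnE keys_add subsetD)

lemma homog_diff [intro]: "homog d p \<Longrightarrow> homog d q \<Longrightarrow> homog d (p - q)"
  unfolding homog_iff_monom_degree by (metis (no_types) UnE keys_diff subsetD)

lemma homog_sum [intro]: "(\<And>i. i \<in> S \<Longrightarrow> homog d (f i)) \<Longrightarrow> homog d (sum f S)"
  by (induction S rule: infinite_finite_induct) auto

lemma homog_mult [intro]: "homog d1 p \<Longrightarrow> homog d2 q \<Longrightarrow> homog (d1 + d2) (p * q)"
  unfolding homog_iff_monom_degree using keys_mult by fastforce

lemma homog_var [simp, intro]: "homog (Suc 0) (var v)"
  by (simp add: homog_iff_monom_degree var_def)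

definition homog_comp :: "nat \<Rightarrow> ('v, 'k::comm_ring_1) mpoly \<Rightarrow> ('v, 'k) mpoly" where
  "homog_comp d p = Abs_poly_mapping (\<lambda>m. if monom_degree m = d then Poly_Mapping.lookup p m else 0)"

lemma lookup_homog_comp:
  "Poly_Mapping.lookup (homog_comp d p) m = (if monom_degree m = d then Poly_Mapping.lookup p m else 0)"
proof -
  have "finite {m. (if monom_degree m = d then Poly_Mapping.lookup p m else 0) \<noteq> 0}"
    by (rule finite_subset[OF _ finite_lookup[of p]]) auto
  then show ?thesis unfolding homog_comp_def by simp
qed

lemma poly_over_homog_comp [intro]: "poly_over V p \<Longrightarrow> poly_over V (homog_comp d p)"
  unfolding poly_over_def by (auto simp: in_keys_iff lookup_homog_comp split: if_splits)

lemma homog_homog_comp [intro]: "homog d (homog_comp d p)"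
  by (auto simp: homog_iff_monom_degree in_keys_iff lookup_homog_comp split: if_splits)

lemma homog_comp_diff: "homog_comp d (p - q) = homog_comp d p - homog_comp d q"
  by (rule poly_mapping_eqI) (simp add: lookup_homog_comp lookup_minus)

lemma homog_comp_zero [simp]: "homog_comp d 0 = 0"
  by (rule poly_mapping_eqI) (simp add: lookup_homog_comp)

lemma homog_comp_add: "homog_comp d (p + q) = homog_comp d p + homog_comp d q"
  by (rule poly_mapping_eqI) (simp add: lookup_homog_comp lookup_add)

lemma homog_comp_sum: "homog_comp d (sum f S) = (\<Sum>i\<in>S. homog_comp d (f i))"
proof (induction S rule: infinite_finite_induct)
  case (insert x F)
  then show ?case by (simp add: homog_comp_add)
qed simp_all

lemma homog_comp_homog: "homog e p \<Longrightarrow> homog_comp d p = (if e = d then p else 0)"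
  by (rule poly_mapping_eqI) (auto simp: lookup_homog_comp homog_iff_monom_degree in_keys_iff)

lemma homog_comp_decompose:
  assumes "\<forall>m\<in>Poly_Mapping.keys p. monom_degree m < N"
  shows "p = (\<Sum>k<N. homog_comp k p)"
proof (rule poly_mapping_eqI)
  fix m
  have "(\<Sum>k<N. Poly_Mapping.lookup (homog_comp k p) m) = Poly_Mapping.lookup p m"
    using assms by (auto simp: lookup_homog_comp in_keys_iff)
  then show "Poly_Mapping.lookup p m = Poly_Mapping.lookup (\<Sum>k<N. homog_comp k p) m"
    by (simp add: lookup_sum)
qed

lemma homog_comp_mult_homog:
  assumes g: "homog e g"
  shows "homog_comp d (g * q) = (if e \<le> d then g * homog_comp (d - e) q else 0)"
proof -
  define N where "N = Suc (d + Max (monom_degree ` Poly_Mapping.keys q))"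
  have N: "\<forall>m\<in>Poly_Mapping.keys q. monom_degree m < N" and "d - e < N"
    unfolding N_def by (auto intro!: le_imp_less_Suc trans_le_add2 Max_ge)
  have "homog_comp d (g * q) = (\<Sum>k<N. homog_comp d (g * homog_comp k q))"
    by (subst homog_comp_decompose[OF N]) (simp add: sum_distrib_left homog_comp_sum)
  also have "\<dots> = (\<Sum>k<N. if e + k = d then g * homog_comp k q else 0)"
  proof (rule sum.cong)
    fix k
    have "homog (e + k) (g * homog_comp k q)" using g by blast
    then show "homog_comp d (g * homog_comp k q) = (if e + k = d then g * homog_comp k q else 0)"
      by (simp add: homog_comp_homog)
  qed simp
  also have "\<dots> = (if e \<le> d then g * homog_comp (d - e) q else 0)"
  proof (cases "e \<le> d")
    case True
    then have "(e + k = d) = (k = d - e)" for k by auto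
    with True \<open>d - e < N\<close> show ?thesis by (simp add: sum.delta')
  qed (auto intro: sum.neutral)
  finally show ?thesis .
qed

lemma gen_ideal_zero [simp]: "0 \<in> gen_ideal V G"
  unfolding gen_ideal_def by (auto intro!: exI[of _ "\<lambda>_. 0"])

lemma gen_ideal_add:
  assumes "p \<in> gen_ideal V G" "q \<in> gen_ideal V G"
  shows "p + q \<in> gen_ideal V G"
proof -
  obtain c c' where "\<forall>g\<in>G. poly_over V (c g)" "p = (\<Sum>g\<in>G. c g * g)"
    and "\<forall>g\<in>G. poly_over V (c' g)" "q = (\<Sum>g\<in>G. c' g * g)"
    using assms unfolding gen_ideal_def by blast
  then show ?thesis
    unfolding gen_ideal_def by (auto intro!: exI[of _ "\<lambda>g. c g + c' g"] simp: distrib_right sum.distrib)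
qed

lemma gen_ideal_mult:
  assumes "poly_over V r" "p \<in> gen_ideal V G"
  shows "r * p \<in> gen_ideal V G"
proof -
  obtain c where "\<forall>g\<in>G. poly_over V (c g)" "p = (\<Sum>g\<in>G. c g * g)"
    using assms(2) unfolding gen_ideal_def by blast
  with assms(1) show ?thesis
    unfolding gen_ideal_def by (auto intro!: exI[of _ "\<lambda>g. r * c g"] simp: sum_distrib_left mult.assoc)
qed

lemma gen_ideal_uminus:
  assumes "p \<in> gen_ideal V G"
  shows "- p \<in> gen_ideal V G"
proof -
  have "poly_over V (- 1)" by (intro poly_over_uminus poly_over_one)
  from gen_ideal_mult[OF this assms] show ?thesis by simp
qed

lemma gen_ideal_sum: "(\<And>i. i \<in> S \<Longrightarrow> f i \<in> gen_ideal V G) \<Longrightarrow> sum f S \<in> gen_ideal V G"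
  by (induction S rule: infinite_finite_induct) (auto simp: gen_ideal_add)

lemma gen_ideal_generator:
  assumes "finite G" "g \<in> G"
  shows "g \<in> gen_ideal V G"
proof -
  have "(\<Sum>h\<in>G. (if h = g then 1 else 0) * h) = (\<Sum>h\<in>G. if h = g then h else 0)"
    by (rule sum.cong) simp_all
  also have "\<dots> = g" using assms by (simp add: sum.delta)
  finally have "(\<Sum>h\<in>G. (if h = g then 1 else 0) * h) = g" .
  then show ?thesis
    unfolding gen_ideal_def by (auto intro!: exI[of _ "\<lambda>h. if h = g then 1 else 0"])
qed

lemma gen_ideal_poly_over: "(\<And>g. g \<in> G \<Longrightarrow> poly_over V g) \<Longrightarrow> p \<in> gen_ideal V G \<Longrightarrow> poly_over V p"
  unfolding gen_ideal_def by auto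

lemma gen_ideal_homog_comp:
  assumes "finite G" and homog_G: "\<And>g. g \<in> G \<Longrightarrow> homog e g" and "p \<in> gen_ideal V G"
  shows "homog_comp d p \<in> gen_ideal V G"
proof -
  from assms(3) obtain c where c: "\<forall>g\<in>G. poly_over V (c g)" "p = (\<Sum>g\<in>G. c g * g)"
    unfolding gen_ideal_def by auto
  have "homog_comp d p = (\<Sum>g\<in>G. if e \<le> d then homog_comp (d - e) (c g) * g else 0)"
    unfolding c(2) homog_comp_sum
    by (intro sum.cong) (simp_all add: mult.commute[of "c _"] homog_comp_mult_homog[OF homog_G])
  also have "\<dots> \<in> gen_ideal V G"
    using c(1) by (intro gen_ideal_sum) (auto intro: gen_ideal_mult[OF _ gen_ideal_generator[OF assms(1)]])
  finally show ?thesis .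
qed

lemma gen_ideal_mono:
  assumes "G \<subseteq> G'" "finite G'"
  shows "gen_ideal V G \<subseteq> gen_ideal V G'"
proof
  fix p assume "p \<in> gen_ideal V G"
  then obtain c where c: "\<forall>g\<in>G. poly_over V (c g)" "p = (\<Sum>g\<in>G. c g * g)"
    unfolding gen_ideal_def by auto
  define c' where "c' g = (if g \<in> G then c g else 0)" for g
  have "p = (\<Sum>g\<in>G'. c' g * g)"
    unfolding c(2) c'_def using assms by (intro sum.mono_neutral_cong_left) auto
  moreover have "\<forall>g\<in>G'. poly_over V (c' g)" using c(1) by (simp add: c'_def)
  ultimately show "p \<in> gen_ideal V G'" unfolding gen_ideal_def by auto
qed

lemma gen_ideal_least: "G \<subseteq> gen_ideal V G' \<Longrightarrow> gen_ideal V G \<subseteq> gen_ideal V G'"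
  unfolding gen_ideal_def[of V G]
  by (auto intro!: gen_ideal_sum gen_ideal_mult)

definition monom :: "('v \<Rightarrow>\<^sub>0 nat) \<Rightarrow> ('v, 'k::comm_ring_1) mpoly" where
  "monom m = Poly_Mapping.single m 1"

definition monom_dvd :: "('v \<Rightarrow>\<^sub>0 nat) \<Rightarrow> ('v \<Rightarrow>\<^sub>0 nat) \<Rightarrow> bool" where
  "monom_dvd g m \<longleftrightarrow> (\<forall>x. Poly_Mapping.lookup g x \<le> Poly_Mapping.lookup m x)"

lemma poly_mapping_sum_single: "p = (\<Sum>m\<in>Poly_Mapping.keys p. Poly_Mapping.single m (Poly_Mapping.lookup p m))"
proof (rule poly_mapping_eqI)
  fix k
  have "(\<Sum>m\<in>Poly_Mapping.keys p. Poly_Mapping.lookup (Poly_Mapping.single m (Poly_Mapping.lookup p m)) k)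
      = Poly_Mapping.lookup p k"
    by (simp add: lookup_single when_def sum.delta' in_keys_iff cong: sum.cong)
  then show "Poly_Mapping.lookup p k = Poly_Mapping.lookup (\<Sum>m\<in>Poly_Mapping.keys p. Poly_Mapping.single m (Poly_Mapping.lookup p m)) k"
    by (simp add: lookup_sum)
qed

lemma monom_ideal_keys_dvd:
  assumes "p \<in> gen_ideal V (monom ` Ms :: ('v, 'k::comm_ring_1) mpoly set)" "m \<in> Poly_Mapping.keys p"
  shows "\<exists>g\<in>Ms. monom_dvd g m"
proof -
  obtain c where "p = (\<Sum>h\<in>monom ` Ms. c h * h)"
    using assms(1) unfolding gen_ideal_def by blast
  with assms(2) obtain g where g: "g \<in> Ms" "m \<in> Poly_Mapping.keys (c (monom g) * monom g)"
    using keys_sum[of "\<lambda>h. c h * h" "monom ` Ms"] by blast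
  then obtain x where "m = x + g"
    using keys_mult[of "c (monom g)" "monom g :: ('v, 'k) mpoly"] by (auto simp: monom_def split: if_splits)
  then have "monom_dvd g m" by (simp add: monom_dvd_def lookup_add)
  with g show ?thesis by blast
qed

lemma monom_idealI:
  assumes "finite Ms" and "\<And>g. g \<in> Ms \<Longrightarrow> Poly_Mapping.keys g \<subseteq> V" and "poly_over V p"
    and dvd: "\<forall>m\<in>Poly_Mapping.keys p. \<exists>g\<in>Ms. monom_dvd g m"
  shows "p \<in> gen_ideal V (monom ` Ms :: ('v, 'k::comm_ring_1) mpoly set)"
proof -
  obtain gm where gm: "\<And>m. m \<in> Poly_Mapping.keys p \<Longrightarrow> gm m \<in> Ms \<and> monom_dvd (gm m) m"
    using dvd by metis
  have split: "m = (m - gm m) + gm m" if "m \<in> Poly_Mapping.keys p" for m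
    using gm[OF that] by (intro poly_mapping_eqI) (auto simp: monom_dvd_def lookup_add lookup_minus)
  have "p = (\<Sum>m\<in>Poly_Mapping.keys p. Poly_Mapping.single (m - gm m) (Poly_Mapping.lookup p m) * monom (gm m))"
    by (subst poly_mapping_sum_single) (auto simp: monom_def mult_single simp flip: split intro: sum.cong)
  also have "\<dots> \<in> gen_ideal V (monom ` Ms)"
  proof (intro gen_ideal_sum gen_ideal_mult poly_over_single gen_ideal_generator)
    fix m assume m: "m \<in> Poly_Mapping.keys p"
    have "Poly_Mapping.keys (m - gm m) \<subseteq> Poly_Mapping.keys m"
      by (auto simp: in_keys_iff lookup_minus)
    also have "\<dots> \<subseteq> V" using assms(3) m unfolding poly_over_def by blast
    finally show "Poly_Mapping.keys (m - gm m) \<subseteq> V" .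
    show "monom (gm m) \<in> monom ` Ms" using gm[OF m] by blast
  qed (use assms(1) in simp)
  finally show ?thesis .
qed

lemma keys_var_mult:
  assumes "m \<in> Poly_Mapping.keys p"
  shows "Poly_Mapping.single v 1 + m \<in> Poly_Mapping.keys (var v * p)"
proof -
  have "var v * p = (\<Sum>m\<in>Poly_Mapping.keys p. Poly_Mapping.single (Poly_Mapping.single v 1 + m) (Poly_Mapping.lookup p m))"
    by (subst poly_mapping_sum_single[of p]) (simp add: sum_distrib_left var_def mult_single)
  then have "Poly_Mapping.lookup (var v * p) (Poly_Mapping.single v 1 + m) = Poly_Mapping.lookup p m"
    using assms by (simp add: lookup_sum lookup_single when_def sum.delta cong: sum.cong)
  with assms show ?thesis by (simp add: in_keys_iff)
qed

section \<open>Ideals generated by quadratic monomials\<close>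

locale quadratic_monomial_ideal =
  fixes V :: "'v set" and E :: "'v \<Rightarrow> 'v \<Rightarrow> bool" and rank :: "'v \<Rightarrow> nat"
    and coeffs :: "'k::comm_ring_1 itself"
  assumes finite_V: "finite V" and inj_rank: "inj_on rank V"
begin

definition quad_gens :: "('v, 'k) mpoly set" where
  "quad_gens = {var x * var y | x y. x \<in> V \<and> y \<in> V \<and> E x y}"

abbreviation quad_ideal :: "('v, 'k) mpoly set" where
  "quad_ideal \<equiv> gen_ideal V quad_gens"

definition var_ideal :: "'v set \<Rightarrow> ('v, 'k) mpoly set" where
  "var_ideal T = gen_ideal V (var ` T \<union> quad_gens)"

definition nbhd :: "'v \<Rightarrow> 'v set" where
  "nbhd v = {u \<in> V. E v u \<or> E u v}"

definition gen_monoms :: "'v set \<Rightarrow> ('v \<Rightarrow>\<^sub>0 nat) set" where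
  "gen_monoms T = (\<lambda>t. Poly_Mapping.single t 1) ` T \<union>
     {Poly_Mapping.single x 1 + Poly_Mapping.single y 1 | x y. x \<in> V \<and> y \<in> V \<and> E x y}"

lemma nbhd_subset: "nbhd v \<subseteq> V"
  by (auto simp: nbhd_def)

lemma finite_quad_gens: "finite quad_gens"
proof -
  have "quad_gens = (\<lambda>(x, y). var x * var y) ` {(x, y). x \<in> V \<and> y \<in> V \<and> E x y}"
    unfolding quad_gens_def by auto
  moreover have "finite {(x, y). x \<in> V \<and> y \<in> V \<and> E x y}"
    by (rule finite_subset[of _ "V \<times> V"]) (auto simp: finite_V)
  ultimately show ?thesis by simp
qed

lemma poly_over_quad_gens: "g \<in> quad_gens \<Longrightarrow> poly_over V g"
  unfolding quad_gens_def by auto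

lemma homog_quad_gens: "g \<in> quad_gens \<Longrightarrow> homog 2 g"
  unfolding quad_gens_def using homog_mult[OF homog_var homog_var] by (auto simp: numeral_2_eq_2)

lemma quad_ideal_homog_comp: "p \<in> quad_ideal \<Longrightarrow> homog_comp d p \<in> quad_ideal"
  by (rule gen_ideal_homog_comp[OF finite_quad_gens homog_quad_gens])

lemma var_mult_var_in_quad_ideal:
  assumes "x \<in> V" "y \<in> V" "E x y \<or> E y x"
  shows "var x * var y \<in> quad_ideal"
proof -
  have "var x * var y = var y * var x" by (rule mult.commute)
  then have "var x * var y \<in> quad_gens"
    using assms unfolding quad_gens_def by blast
  then show ?thesis by (rule gen_ideal_generator[OF finite_quad_gens])
qed

lemma quad_ideal_subset_var_ideal: "T \<subseteq> V \<Longrightarrow> quad_ideal \<subseteq> var_ideal T"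
  unfolding var_ideal_def
  by (rule gen_ideal_mono) (auto simp: finite_quad_gens finite_subset[OF _ finite_V])

lemma var_ideal_eq_monom_ideal: "var_ideal T = gen_ideal V (monom ` gen_monoms T)"
proof -
  have vars: "var ` T = monom ` (\<lambda>t. Poly_Mapping.single t 1) ` T"
    by (auto simp: var_def monom_def)
  have quads: "quad_gens = monom ` {Poly_Mapping.single x 1 + Poly_Mapping.single y 1 | x y. x \<in> V \<and> y \<in> V \<and> E x y}"
    unfolding quad_gens_def by (auto simp: var_def monom_def mult_single)
  show ?thesis
    unfolding var_ideal_def gen_monoms_def image_Un vars quads ..
qed

lemma finite_gen_monoms:
  assumes "T \<subseteq> V"
  shows "finite (gen_monoms T)"
proof -
  have "{Poly_Mapping.single x 1 + Poly_Mapping.single y (1::nat) | x y. x \<in> V \<and> y \<in> V \<and> E x y}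
      \<subseteq> (\<lambda>(x, y). Poly_Mapping.single x 1 + Poly_Mapping.single y 1) ` (V \<times> V)"
    by auto
  then have "finite {Poly_Mapping.single x 1 + Poly_Mapping.single y (1::nat) | x y. x \<in> V \<and> y \<in> V \<and> E x y}"
    by (rule finite_subset) (simp add: finite_V)
  then show ?thesis
    unfolding gen_monoms_def using finite_subset[OF assms finite_V] by simp
qed

lemma keys_gen_monoms: "T \<subseteq> V \<Longrightarrow> g \<in> gen_monoms T \<Longrightarrow> Poly_Mapping.keys g \<subseteq> V"
  unfolding gen_monoms_def by (auto simp: keys_add_nat)

lemma monom_dvd_single_iff: "monom_dvd (Poly_Mapping.single u 1) m \<longleftrightarrow> 1 \<le> Poly_Mapping.lookup m u"
  by (auto simp: monom_dvd_def lookup_single when_def)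

text \<open>A generator dividing \<open>x\<^sub>v m\<close> either divides \<open>m\<close>, or it is \<open>x\<^sub>v x\<^sub>u\<close> with \<open>u \<in> nbhd v\<close>,
  and then \<open>x\<^sub>u\<close> divides \<open>m\<close>.\<close>

lemma gen_monoms_colon:
  assumes "v \<notin> T" "g \<in> gen_monoms T" "monom_dvd g (Poly_Mapping.single v 1 + m)"
  shows "\<exists>g'\<in>gen_monoms (T \<union> nbhd v). monom_dvd g' m"
proof -
  have le: "Poly_Mapping.lookup g z \<le> (if z = v then 1 else 0) + Poly_Mapping.lookup m z" for z
    using assms(3)[unfolded monom_dvd_def, rule_format, of z]
    by (cases "z = v") (auto simp: lookup_add lookup_single when_def)
  consider t where "t \<in> T" "g = Poly_Mapping.single t 1"
    | x y where "x \<in> V" "y \<in> V" "E x y" "g = Poly_Mapping.single x 1 + Poly_Mapping.single y 1"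
    using assms(2) unfolding gen_monoms_def by blast
  then show ?thesis
  proof cases
    case 1
    with assms(1) le[of t] monom_dvd_single_iff[of t m] have "monom_dvd g m"
      by (auto split: if_splits)
    moreover have "g \<in> gen_monoms (T \<union> nbhd v)" using 1 unfolding gen_monoms_def by blast
    ultimately show ?thesis by blast
  next
    case 2
    have lg: "Poly_Mapping.lookup g z = (if z = x then 1 else 0) + (if z = y then 1 else 0)" for z
      using 2(4) by (simp add: lookup_add lookup_single when_def)
    show ?thesis
    proof (cases "x = v \<or> y = v")
      case True
      define u where "u = (if x = v then y else x)"
      have "u \<in> nbhd v" using 2 True unfolding u_def nbhd_def by auto
      then have "Poly_Mapping.single u 1 \<in> gen_monoms (T \<union> nbhd v)" unfolding gen_monoms_def by blast
      moreover have "monom_dvd (Poly_Mapping.single u 1) m"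
        using le[of u] lg[of u] True unfolding u_def monom_dvd_single_iff by (auto split: if_splits)
      ultimately show ?thesis by blast
    next
      case False
      then have "Poly_Mapping.lookup g z \<le> Poly_Mapping.lookup m z" for z
        using le[of z] lg[of z] by (cases "z = v") auto
      then have "monom_dvd g m" unfolding monom_dvd_def by blast
      moreover have "g \<in> gen_monoms (T \<union> nbhd v)" using 2 unfolding gen_monoms_def by blast
      ultimately show ?thesis by blast
    qed
  qed
qed

lemma var_ideal_colon:
  assumes "T \<subseteq> V" "v \<notin> T" "poly_over V p" "var v * p \<in> var_ideal T"
  shows "p \<in> var_ideal (T \<union> nbhd v)"
  unfolding var_ideal_eq_monom_ideal
proof (rule monom_idealI)
  have TN: "T \<union> nbhd v \<subseteq> V" using assms(1) nbhd_subset by blast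
  then show "finite (gen_monoms (T \<union> nbhd v))" by (rule finite_gen_monoms)
  show "\<And>g. g \<in> gen_monoms (T \<union> nbhd v) \<Longrightarrow> Poly_Mapping.keys g \<subseteq> V"
    using keys_gen_monoms[OF TN] by blast
  show "\<forall>m\<in>Poly_Mapping.keys p. \<exists>g\<in>gen_monoms (T \<union> nbhd v). monom_dvd g m"
  proof
    fix m assume "m \<in> Poly_Mapping.keys p"
    then have "Poly_Mapping.single v 1 + m \<in> Poly_Mapping.keys (var v * p)" by (rule keys_var_mult)
    then obtain g where "g \<in> gen_monoms T" "monom_dvd g (Poly_Mapping.single v 1 + m)"
      using monom_ideal_keys_dvd[OF assms(4)[unfolded var_ideal_eq_monom_ideal]] by blast
    then show "\<exists>g'\<in>gen_monoms (T \<union> nbhd v). monom_dvd g' m" by (rule gen_monoms_colon[OF assms(2)])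
  qed
qed fact

lemma var_ideal_iff:
  assumes T: "T \<subseteq> V"
  shows "p \<in> var_ideal T \<longleftrightarrow> (\<exists>u. (\<forall>t. poly_over V (u t)) \<and> p - (\<Sum>t\<in>T. u t * var t) \<in> quad_ideal)"
proof
  have finT: "finite T" using finite_subset[OF T finite_V] .
  assume "p \<in> var_ideal T"
  then obtain c where c: "\<forall>g\<in>var ` T \<union> quad_gens. poly_over V (c g)" "p = (\<Sum>g\<in>var ` T \<union> quad_gens. c g * g)"
    unfolding var_ideal_def gen_ideal_def by blast
  have "p = (\<Sum>g\<in>var ` T. c g * g) + (\<Sum>g\<in>quad_gens - var ` T. c g * g)"
    unfolding c(2) by (subst Un_Diff_cancel[symmetric], rule sum.union_disjoint) (use finT finite_quad_gens in auto)
  moreover have "(\<Sum>g\<in>var ` T. c g * g) = (\<Sum>t\<in>T. c (var t) * var t)"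
    by (rule sum.reindex_cong[OF inj_on_subset[OF inj_var]]) auto
  moreover have "(\<Sum>g\<in>quad_gens - var ` T. c g * g) \<in> quad_ideal"
    using c(1) gen_ideal_mono[of "quad_gens - var ` T" quad_gens V] finite_quad_gens
    unfolding gen_ideal_def by blast
  ultimately show "\<exists>u. (\<forall>t. poly_over V (u t)) \<and> p - (\<Sum>t\<in>T. u t * var t) \<in> quad_ideal"
    using c(1) by (intro exI[of _ "\<lambda>t. if t \<in> T then c (var t) else 0"]) (auto cong: sum.cong)
next
  assume "\<exists>u. (\<forall>t. poly_over V (u t)) \<and> p - (\<Sum>t\<in>T. u t * var t) \<in> quad_ideal"
  then obtain u where u: "\<forall>t. poly_over V (u t)" "p - (\<Sum>t\<in>T. u t * var t) \<in> quad_ideal" by blast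
  have fin: "finite (var ` T \<union> quad_gens)" using finite_subset[OF T finite_V] finite_quad_gens by simp
  have "(\<Sum>t\<in>T. u t * var t) \<in> var_ideal T"
    unfolding var_ideal_def using u(1)
    by (intro gen_ideal_sum gen_ideal_mult gen_ideal_generator[OF fin]) auto
  moreover have "p - (\<Sum>t\<in>T. u t * var t) \<in> var_ideal T"
    using u(2) quad_ideal_subset_var_ideal[OF T] by blast
  ultimately show "p \<in> var_ideal T"
    using gen_ideal_add unfolding var_ideal_def by fastforce
qed

lemma var_ideal_all: "var_ideal V = gen_ideal V (var ` V)"
proof
  show "gen_ideal V (var ` V) \<subseteq> var_ideal V"
    unfolding var_ideal_def by (rule gen_ideal_mono) (auto simp: finite_quad_gens finite_V)
  have "quad_gens \<subseteq> gen_ideal V (var ` V)"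
    unfolding quad_gens_def using finite_V by (auto intro!: gen_ideal_mult[OF _ gen_ideal_generator])
  moreover have "var ` V \<subseteq> gen_ideal V (var ` V)"
    using finite_V by (auto intro: gen_ideal_generator)
  ultimately show "var_ideal V \<subseteq> gen_ideal V (var ` V)"
    unfolding var_ideal_def by (intro gen_ideal_least) blast
qed

end

text \<open>A vector is a function on an index type that vanishes outside a finite set of basis indices.
  A matrix is the family \<open>f\<close> of its columns, so \<open>lincomb S f z\<close> is the product of the matrix with
  the vector \<open>z\<close> supported on \<open>S\<close>.\<close>

definition lincomb :: "'w set \<Rightarrow> ('w \<Rightarrow> 'x \<Rightarrow> 'p::comm_ring_1) \<Rightarrow> ('w \<Rightarrow> 'p) \<Rightarrow> 'x \<Rightarrow> 'p" where
  "lincomb S f z x = (\<Sum>w\<in>S. z w * f w x)"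

definition supp_in :: "'w set \<Rightarrow> ('w \<Rightarrow> 'a::zero) \<Rightarrow> bool" where
  "supp_in S y \<longleftrightarrow> (\<forall>x. x \<notin> S \<longrightarrow> y x = 0)"

text \<open>\<open>prepend t z\<close> is the image of \<open>z\<close> under the embedding \<open>e\<^sub>w \<mapsto> e\<^sub>t\<^sub>w\<close>.\<close>

definition prepend :: "'v \<Rightarrow> ('v list \<Rightarrow> 'a::zero) \<Rightarrow> 'v list \<Rightarrow> 'a" where
  "prepend t z x = (case x of [] \<Rightarrow> 0 | s # y \<Rightarrow> if s = t then z y else 0)"

lemma prepend_Nil [simp]: "prepend t z [] = 0"
  by (simp add: prepend_def)

lemma prepend_Cons [simp]: "prepend t z (s # y) = (if s = t then z y else 0)"
  by (simp add: prepend_def)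

lemma prepend_zero [simp]: "prepend t (\<lambda>x. 0) = (\<lambda>x. 0)"
  by (simp add: fun_eq_iff prepend_def split: list.splits)

lemma lincomb_zero_vec [simp]: "lincomb S f (\<lambda>w. 0) = (\<lambda>x. 0)"
  by (simp add: lincomb_def fun_eq_iff)

lemma lincomb_add_vec: "lincomb S f (\<lambda>w. y w + z w) x = lincomb S f y x + lincomb S f z x"
  by (simp add: lincomb_def distrib_right sum.distrib)

lemma lincomb_diff_vec: "lincomb S f (\<lambda>w. y w - z w) x = lincomb S f y x - lincomb S f z x"
  by (simp add: lincomb_def left_diff_distrib sum_subtractf)

lemma lincomb_diff_mat: "lincomb S (\<lambda>w x. f w x - g w x) z x = lincomb S f z x - lincomb S g z x"
  by (simp add: lincomb_def right_diff_distrib sum_subtractf)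

lemma lincomb_cong:
  "(\<And>w. w \<in> S \<Longrightarrow> y w = z w) \<Longrightarrow> (\<And>w. w \<in> S \<Longrightarrow> f w x = g w x) \<Longrightarrow> lincomb S f y x = lincomb S g z x"
  unfolding lincomb_def by (rule sum.cong) auto

lemma lincomb_mono_neutral:
  assumes "finite S'" "S \<subseteq> S'" "supp_in S z"
  shows "lincomb S' f z x = lincomb S f z x"
  unfolding lincomb_def using assms by (intro sum.mono_neutral_right) (auto simp: supp_in_def)

lemma lincomb_lincomb: "lincomb S2 g (lincomb S1 f z) = lincomb S1 (\<lambda>w. lincomb S2 g (f w)) z"
  unfolding lincomb_def
  by (simp add: fun_eq_iff sum_distrib_left sum_distrib_right mult.assoc) (rule allI, rule sum.swap)

lemma lincomb_prepend_mat: "lincomb S (\<lambda>w. prepend t (f w)) z x = prepend t (lincomb S f z) x"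
  by (cases x) (auto simp: lincomb_def)

lemma lincomb_prepend_vec:
  assumes "finite S'" "(#) t ` S \<subseteq> S'" "supp_in S z"
  shows "lincomb S' f (prepend t z) x = lincomb S (\<lambda>w. f (t # w)) z x"
proof -
  have "supp_in ((#) t ` S) (prepend t z)"
    using assms(3) unfolding supp_in_def by (auto simp: prepend_def split: list.splits)
  then have "lincomb S' f (prepend t z) x = lincomb ((#) t ` S) f (prepend t z) x"
    by (rule lincomb_mono_neutral[OF assms(1,2)])
  also have "\<dots> = lincomb S (\<lambda>w. f (t # w)) z x"
    unfolding lincomb_def by (subst sum.reindex) (auto simp: inj_on_def)
  finally show ?thesis .
qed

lemma supp_in_mono: "supp_in S y \<Longrightarrow> S \<subseteq> S' \<Longrightarrow> supp_in S' y"
  unfolding supp_in_def by auto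

lemma supp_in_diff: "supp_in S y \<Longrightarrow> supp_in S z \<Longrightarrow> supp_in S (\<lambda>x. y x - (z x :: 'a::ab_group_add))"
  unfolding supp_in_def by auto

lemma supp_in_add: "supp_in S y \<Longrightarrow> supp_in S z \<Longrightarrow> supp_in S (\<lambda>x. y x + (z x :: 'a::monoid_add))"
  unfolding supp_in_def by auto

lemma supp_in_lincomb: "(\<And>w. w \<in> S \<Longrightarrow> supp_in S' (f w)) \<Longrightarrow> supp_in S' (lincomb S f z)"
  unfolding supp_in_def lincomb_def by auto

lemma supp_in_prepend: "supp_in S z \<Longrightarrow> (\<And>y. y \<in> S \<Longrightarrow> t # y \<in> S') \<Longrightarrow> supp_in S' (prepend t z)"
  unfolding supp_in_def by (auto simp: prepend_def split: list.splits)

section \<open>Admissible words\<close>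

context quadratic_monomial_ideal
begin

text \<open>Admissible words of length \<open>i\<close> for \<open>T\<close> index a basis of the \<open>i\<close>-th module \<open>F\<^sub>i(T)\<close> of the
  linear resolution of \<open>R/I\<^sub>T\<close>, where \<open>I\<^sub>T = (x\<^sub>t : t \<in> T) + J\<close>. If \<open>v\<close> has the largest rank in \<open>T\<close>,
  then \<open>F(T)\<close> is the mapping cone of a lift of \<open>x\<^sub>v : F(T - {v} \<union> nbhd v) \<rightarrow> F(T - {v})\<close>, so
  \<open>F\<^sub>i(T) = F\<^sub>i(T - {v}) \<oplus> F\<^bsub>i-1\<^esub>(T - {v} \<union> nbhd v)\<close> with the second summand spanned by the words
  \<open>v w\<close>. Unfolding this recursion gives the definition below.\<close>

definition lower :: "'v set \<Rightarrow> 'v \<Rightarrow> 'v set" where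
  "lower T t = {u \<in> T. rank u < rank t}"

fun admissible :: "'v set \<Rightarrow> 'v list \<Rightarrow> bool" where
  "admissible T [] \<longleftrightarrow> True"
| "admissible T (t # w) \<longleftrightarrow> t \<in> T \<and> admissible (lower T t \<union> nbhd t) w"

definition basis :: "nat \<Rightarrow> 'v set \<Rightarrow> 'v list set" where
  "basis i T = {w. admissible T w \<and> length w = i}"

lemma lower_subset: "lower T t \<subseteq> T"
  by (auto simp: lower_def)

lemma lower_nbhd_subset: "T \<subseteq> V \<Longrightarrow> lower T t \<union> nbhd t \<subseteq> V"
  using lower_subset nbhd_subset by blast

lemma lower_lower: "s \<in> lower T t \<Longrightarrow> lower (lower T t) s = lower T s"
  by (auto simp: lower_def)

lemma admissible_mono: "T \<subseteq> T' \<Longrightarrow> admissible T w \<Longrightarrow> admissible T' w"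
proof (induction w arbitrary: T T')
  case (Cons t w)
  have sub: "lower T t \<union> nbhd t \<subseteq> lower T' t \<union> nbhd t" using Cons.prems(1) by (auto simp: lower_def)
  have "admissible (lower T' t \<union> nbhd t) w" using Cons.IH[OF sub] Cons.prems(2) by simp
  then show ?case using Cons.prems by auto
qed simp

lemma admissible_subset: "T \<subseteq> V \<Longrightarrow> admissible T w \<Longrightarrow> set w \<subseteq> V"
proof (induction w arbitrary: T)
  case (Cons t w)
  have "set w \<subseteq> V" using Cons.IH[OF lower_nbhd_subset[OF Cons.prems(1)]] Cons.prems(2) by auto
  with Cons.prems show ?case by auto
qed simp

lemma finite_basis: "T \<subseteq> V \<Longrightarrow> finite (basis i T)"
  by (rule finite_subset[OF _ finite_lists_length_eq[OF finite_V, of i]])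
    (auto simp: basis_def dest: admissible_subset)

lemma basis_0 [simp]: "basis 0 T = {[]}"
  by (auto simp: basis_def)

lemma Cons_in_basis: "t # w \<in> basis (Suc i) T \<longleftrightarrow> t \<in> T \<and> w \<in> basis i (lower T t \<union> nbhd t)"
  by (auto simp: basis_def)

lemma basis_SucE:
  assumes "w \<in> basis (Suc i) T"
  obtains t y where "w = t # y" "t \<in> T" "y \<in> basis i (lower T t \<union> nbhd t)"
  using assms by (cases w) (auto simp: basis_def)

lemma basis_mono: "T \<subseteq> T' \<Longrightarrow> basis i T \<subseteq> basis i T'"
  unfolding basis_def using admissible_mono by blast

lemma basis_empty: "basis (Suc i) {} = {}"
  by (auto elim: basis_SucE)

lemma basis_1: "basis (Suc 0) T = (\<lambda>s. [s]) ` T"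
  by (auto simp: basis_def length_Suc_conv)

lemma sum_basis_1: "(\<Sum>w\<in>basis (Suc 0) T. f w) = (\<Sum>s\<in>T. f [s])"
  unfolding basis_1 by (subst sum.reindex) (auto simp: inj_on_def)

context
  fixes T v assumes T: "T \<subseteq> V" and v: "v \<in> T" and v_max: "\<And>u. u \<in> T \<Longrightarrow> rank u \<le> rank v"
begin

lemma lower_max: "lower T v = T - {v}"
proof -
  have "rank u < rank v" if "u \<in> T" "u \<noteq> v" for u
    using v_max[OF that(1)] inj_rank that T v unfolding inj_on_def by (metis le_neq_implies_less subsetD)
  then show ?thesis unfolding lower_def by auto
qed

lemma lower_remove_max: "s \<in> T - {v} \<Longrightarrow> lower (T - {v}) s = lower T s"
  using lower_max lower_lower[of s T v] by (auto simp: lower_def)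

end

definition cong_quad :: "('w \<Rightarrow> ('v, 'k) mpoly) \<Rightarrow> ('w \<Rightarrow> ('v, 'k) mpoly) \<Rightarrow> bool" where
  "cong_quad y z \<longleftrightarrow> (\<forall>x. y x - z x \<in> quad_ideal)"

definition linear_vec :: "('w \<Rightarrow> ('v, 'k) mpoly) \<Rightarrow> bool" where
  "linear_vec y \<longleftrightarrow> (\<forall>x. poly_over V (y x) \<and> homog 1 (y x))"

definition poly_vec :: "('w \<Rightarrow> ('v, 'k) mpoly) \<Rightarrow> bool" where
  "poly_vec y \<longleftrightarrow> (\<forall>x. poly_over V (y x))"

lemma cong_quad_refl [simp]: "cong_quad y y"
  by (simp add: cong_quad_def)

lemma cong_quad_sym: "cong_quad y z \<Longrightarrow> cong_quad z y"
  unfolding cong_quad_def by (metis gen_ideal_uminus minus_diff_eq)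

lemma cong_quad_trans:
  assumes "cong_quad x y" "cong_quad y z"
  shows "cong_quad x z"
  unfolding cong_quad_def
proof
  fix w
  have "(x w - y w) + (y w - z w) \<in> quad_ideal"
    using assms gen_ideal_add unfolding cong_quad_def by blast
  then show "x w - z w \<in> quad_ideal" by simp
qed

lemma cong_quad_add:
  "cong_quad y y' \<Longrightarrow> cong_quad z z' \<Longrightarrow> cong_quad (\<lambda>x. y x + z x) (\<lambda>x. y' x + z' x)"
  unfolding cong_quad_def
proof (intro allI impI)
  fix x assume "\<forall>x. y x - y' x \<in> quad_ideal" "\<forall>x. z x - z' x \<in> quad_ideal"
  then have "(y x - y' x) + (z x - z' x) \<in> quad_ideal" using gen_ideal_add by blast
  then show "y x + z x - (y' x + z' x) \<in> quad_ideal" by (simp add: algebra_simps)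
qed

lemma cong_quad_zero_iff: "cong_quad y (\<lambda>x. 0) \<longleftrightarrow> (\<forall>x. y x \<in> quad_ideal)"
  by (simp add: cong_quad_def)

lemma cong_quad_lincomb_vec:
  assumes "cong_quad y z" "\<And>w x. w \<in> S \<Longrightarrow> poly_over V (f w x)"
  shows "cong_quad (lincomb S f y) (lincomb S f z)"
  unfolding cong_quad_def
proof
  fix x
  have "lincomb S f y x - lincomb S f z x = (\<Sum>w\<in>S. f w x * (y w - z w))"
    unfolding lincomb_def by (simp add: algebra_simps sum_subtractf)
  also have "\<dots> \<in> quad_ideal"
    using assms unfolding cong_quad_def by (intro gen_ideal_sum gen_ideal_mult) auto
  finally show "lincomb S f y x - lincomb S f z x \<in> quad_ideal" .
qed

lemma cong_quad_lincomb_mat: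
  assumes "poly_vec z" "\<And>w. w \<in> S \<Longrightarrow> cong_quad (f w) (g w)"
  shows "cong_quad (lincomb S f z) (lincomb S g z)"
  unfolding cong_quad_def
proof
  fix x
  have "lincomb S f z x - lincomb S g z x = (\<Sum>w\<in>S. z w * (f w x - g w x))"
    unfolding lincomb_def by (simp add: right_diff_distrib sum_subtractf)
  also have "\<dots> \<in> quad_ideal"
    using assms unfolding cong_quad_def poly_vec_def by (intro gen_ideal_sum gen_ideal_mult) auto
  finally show "lincomb S f z x - lincomb S g z x \<in> quad_ideal" .
qed

lemma cong_quad_prepend: "cong_quad y z \<Longrightarrow> cong_quad (prepend t y) (prepend t z)"
  unfolding cong_quad_def prepend_def by (auto split: list.splits)

lemma linear_vec_poly_vec: "linear_vec y \<Longrightarrow> poly_vec y"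
  by (simp add: linear_vec_def poly_vec_def)

lemma linear_vec_zero: "linear_vec (\<lambda>x. 0)"
  by (simp add: linear_vec_def)

lemma linear_vec_diff: "linear_vec y \<Longrightarrow> linear_vec z \<Longrightarrow> linear_vec (\<lambda>x. y x - z x)"
  unfolding linear_vec_def by blast

lemma linear_vec_prepend: "linear_vec y \<Longrightarrow> linear_vec (prepend t y)"
  unfolding linear_vec_def prepend_def by (auto split: list.splits)

lemma poly_vec_lincomb:
  "poly_vec z \<Longrightarrow> (\<And>w x. w \<in> S \<Longrightarrow> poly_over V (f w x)) \<Longrightarrow> poly_vec (lincomb S f z)"
  unfolding poly_vec_def lincomb_def by blast

lemma homog_lincomb:
  "(\<And>w. w \<in> S \<Longrightarrow> homog d1 (z w)) \<Longrightarrow> (\<And>w. w \<in> S \<Longrightarrow> homog d2 (f w x)) \<Longrightarrow> homog (d1 + d2) (lincomb S f z x)"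
  unfolding lincomb_def by blast

text \<open>Since the columns are linear forms and \<open>J\<close> is homogeneous, a solution of a linear system
  with homogeneous right-hand side of degree \<open>d + 1\<close> may be replaced by its degree-\<open>d\<close> part.\<close>

lemma cong_quad_homog_comp:
  assumes "\<And>w. w \<in> S \<Longrightarrow> linear_vec (f w)" and "\<And>x. homog (Suc d) (z x)"
    and "cong_quad (lincomb S f y) z"
  shows "cong_quad (lincomb S f (\<lambda>w. homog_comp d (y w))) z"
  unfolding cong_quad_def
proof
  fix x
  have "homog_comp (Suc d) (lincomb S f y x) = lincomb S f (\<lambda>w. homog_comp d (y w)) x"
    unfolding lincomb_def homog_comp_sum
  proof (rule sum.cong)
    fix w assume "w \<in> S"
    then have "homog 1 (f w x)" using assms(1) by (simp add: linear_vec_def)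
    then show "homog_comp (Suc d) (y w * f w x) = homog_comp d (y w) * f w x"
      by (simp add: mult.commute[of "y w"] homog_comp_mult_homog)
  qed simp
  moreover have "homog_comp (Suc d) (lincomb S f y x - z x) \<in> quad_ideal"
    using assms(3) quad_ideal_homog_comp unfolding cong_quad_def by blast
  ultimately show "lincomb S f (\<lambda>w. homog_comp d (y w)) x - z x \<in> quad_ideal"
    using homog_comp_homog[OF assms(2)] by (simp add: homog_comp_diff)
qed

section \<open>The resolution as an iterated mapping cone\<close>

text \<open>\<open>differential i T w\<close> is the image of the basis vector \<open>w \<in> basis i T\<close> under the \<open>i\<close>-th
  differential of the resolution of \<open>R/I\<^sub>T\<close>; \<open>comparison i T v w\<close> is the image of
  \<open>w \<in> basis i (T \<union> nbhd v)\<close> under a chain map from the resolution of \<open>R/I\<^bsub>T \<union> nbhd v\<^esub>\<close>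
  to that of \<open>R/I\<^sub>T\<close> lifting multiplication by \<open>x\<^sub>v\<close>. Both are defined by simultaneous
  recursion on \<open>i\<close>; a comparison map in degree \<open>i + 1\<close> is chosen by Hilbert choice, and
  \<open>comparison_spec\<close> records what is required of it.\<close>

definition comparison_spec ::
  "nat \<Rightarrow> ('v set \<Rightarrow> 'v list \<Rightarrow> 'v list \<Rightarrow> ('v, 'k) mpoly) \<Rightarrow>
    ('v set \<Rightarrow> 'v \<Rightarrow> 'v list \<Rightarrow> 'v list \<Rightarrow> ('v, 'k) mpoly) \<Rightarrow>
    'v set \<Rightarrow> 'v \<Rightarrow> 'v list \<Rightarrow> ('v list \<Rightarrow> ('v, 'k) mpoly) \<Rightarrow> bool" where
  "comparison_spec k D C T v w y \<longleftrightarrow> supp_in (basis k T) y \<and> linear_vec y \<and>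
     cong_quad (lincomb (basis k T) (D T) y) (lincomb (basis (k - 1) (T \<union> nbhd v)) (C T v) (D (T \<union> nbhd v) w))"

definition cone_differential ::
  "('v set \<Rightarrow> 'v list \<Rightarrow> 'v list \<Rightarrow> ('v, 'k) mpoly) \<Rightarrow>
    ('v set \<Rightarrow> 'v \<Rightarrow> 'v list \<Rightarrow> 'v list \<Rightarrow> ('v, 'k) mpoly) \<Rightarrow>
    'v set \<Rightarrow> 'v list \<Rightarrow> 'v list \<Rightarrow> ('v, 'k) mpoly" where
  "cone_differential D C T w = (case w of [] \<Rightarrow> (\<lambda>x. 0)
     | t # y \<Rightarrow> (\<lambda>x. C (lower T t) t y x - prepend t (D (lower T t \<union> nbhd t) y) x))"

primrec cone_maps ::
  "nat \<Rightarrow> ('v set \<Rightarrow> 'v list \<Rightarrow> 'v list \<Rightarrow> ('v, 'k) mpoly) \<times>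
    ('v set \<Rightarrow> 'v \<Rightarrow> 'v list \<Rightarrow> 'v list \<Rightarrow> ('v, 'k) mpoly)" where
  "cone_maps 0 = ((\<lambda>T w x. 0), (\<lambda>T v w x. if x = [] then var v else 0))"
| "cone_maps (Suc i) = (cone_differential (fst (cone_maps i)) (snd (cone_maps i)),
     (\<lambda>T v w. SOME y. comparison_spec (Suc i) (cone_differential (fst (cone_maps i)) (snd (cone_maps i)))
                        (snd (cone_maps i)) T v w y))"

definition differential :: "nat \<Rightarrow> 'v set \<Rightarrow> 'v list \<Rightarrow> 'v list \<Rightarrow> ('v, 'k) mpoly" where
  "differential i = fst (cone_maps i)"

definition comparison :: "nat \<Rightarrow> 'v set \<Rightarrow> 'v \<Rightarrow> 'v list \<Rightarrow> 'v list \<Rightarrow> ('v, 'k) mpoly" where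
  "comparison i = snd (cone_maps i)"

lemma differential_0 [simp]: "differential 0 T w = (\<lambda>x. 0)"
  by (simp add: differential_def)

lemma differential_Nil [simp]: "differential i T [] = (\<lambda>x. 0)"
  by (cases i) (simp_all add: differential_def cone_differential_def)

lemma comparison_0: "comparison 0 T v w x = (if x = [] then var v else 0)"
  by (simp add: comparison_def)

lemma differential_Suc_Cons:
  "differential (Suc i) T (t # w) =
     (\<lambda>x. comparison i (lower T t) t w x - prepend t (differential i (lower T t \<union> nbhd t) w) x)"
  by (simp add: differential_def comparison_def cone_differential_def)

lemma differential_1: "differential (Suc 0) T [s] x = (if x = [] then var s else 0)"
  by (simp add: differential_Suc_Cons comparison_0)

lemma comparison_Suc_spec:
  assumes "\<exists>y. comparison_spec (Suc i) (differential (Suc i)) (comparison i) T v w y"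
  shows "comparison_spec (Suc i) (differential (Suc i)) (comparison i) T v w (comparison (Suc i) T v w)"
  using someI_ex[OF assms] by (simp add: differential_def comparison_def)

lemma differential_Cons_cong: "lower T s = lower T' s \<Longrightarrow> differential i T (s # y) = differential i T' (s # y)"
  by (cases i) (auto simp: differential_Suc_Cons fun_eq_iff)

lemma lincomb_differential_restrict:
  assumes "T \<subseteq> V" "T' \<subseteq> T" "\<And>s. s \<in> T' \<Longrightarrow> lower T' s = lower T s" "supp_in (basis k T') y"
  shows "lincomb (basis k T) (differential k T) y x = lincomb (basis k T') (differential k T') y x"
proof -
  have "lincomb (basis k T) (differential k T) y x = lincomb (basis k T') (differential k T) y x"
    using assms by (intro lincomb_mono_neutral finite_basis basis_mono)
  also have "\<dots> = lincomb (basis k T') (differential k T') y x"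
  proof (rule lincomb_cong)
    fix w assume w: "w \<in> basis k T'"
    show "differential k T w x = differential k T' w x"
    proof (cases w)
      case (Cons s y')
      with w have "s \<in> T'" by (simp add: basis_def)
      with Cons show ?thesis using differential_Cons_cong[OF assms(3)[symmetric]] by simp
    qed simp
  qed simp
  finally show ?thesis .
qed

lemma lincomb_differential_prepend:
  assumes "T \<subseteq> V" "t \<in> T" "supp_in (basis i (lower T t \<union> nbhd t)) z"
  shows "lincomb (basis (Suc i) T) (differential (Suc i) T) (prepend t z) x =
    lincomb (basis i (lower T t \<union> nbhd t)) (comparison i (lower T t) t) z x
    - prepend t (lincomb (basis i (lower T t \<union> nbhd t)) (differential i (lower T t \<union> nbhd t)) z) x"
proof -
  have "(#) t ` basis i (lower T t \<union> nbhd t) \<subseteq> basis (Suc i) T"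
    using assms(2) by (auto simp: Cons_in_basis)
  then have "lincomb (basis (Suc i) T) (differential (Suc i) T) (prepend t z) x =
      lincomb (basis i (lower T t \<union> nbhd t)) (\<lambda>w x. comparison i (lower T t) t w x
        - prepend t (differential i (lower T t \<union> nbhd t) w) x) z x"
    by (simp add: lincomb_prepend_vec[OF finite_basis[OF assms(1)] _ assms(3)] differential_Suc_Cons)
  then show ?thesis by (simp only: lincomb_diff_mat lincomb_prepend_mat)
qed

context
  fixes T v assumes T: "T \<subseteq> V" and v: "v \<in> T" and v_max: "\<And>u. u \<in> T \<Longrightarrow> rank u \<le> rank v"
begin

lemma Cons_in_basis_remove_max:
  assumes "s \<noteq> v" "s # y \<in> basis (Suc i) T"
  shows "s # y \<in> basis (Suc i) (T - {v})"
  using assms lower_remove_max[OF T v v_max, of s] by (auto simp: Cons_in_basis)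

lemma vec_split_max:
  assumes "supp_in (basis (Suc i) T) (u :: 'v list \<Rightarrow> ('v, 'k) mpoly)"
  shows "u x = (if x \<in> basis (Suc i) (T - {v}) then u x else 0) + prepend v (\<lambda>y. u (v # y)) x"
    and "supp_in (basis i ((T - {v}) \<union> nbhd v)) (\<lambda>y. u (v # y))"
proof -
  show "u x = (if x \<in> basis (Suc i) (T - {v}) then u x else 0) + prepend v (\<lambda>y. u (v # y)) x"
  proof (cases x)
    case (Cons s y)
    show ?thesis
    proof (cases "s = v")
      case True
      then show ?thesis using Cons by (simp add: Cons_in_basis)
    next
      case False
      then show ?thesis
        using assms Cons Cons_in_basis_remove_max[of s y i] unfolding supp_in_def by auto
    qed
  qed (use assms in \<open>simp add: supp_in_def basis_def\<close>)
  show "supp_in (basis i ((T - {v}) \<union> nbhd v)) (\<lambda>y. u (v # y))"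
    using assms v unfolding supp_in_def by (auto simp: Cons_in_basis lower_max[OF T v v_max])
qed

lemma lincomb_differential_split_max:
  assumes "supp_in (basis (Suc i) T) u"
  shows "lincomb (basis (Suc i) T) (differential (Suc i) T) u x =
     lincomb (basis (Suc i) (T - {v})) (differential (Suc i) (T - {v})) u x
     + lincomb (basis i ((T - {v}) \<union> nbhd v)) (comparison i (T - {v}) v) (\<lambda>y. u (v # y)) x
     - prepend v (lincomb (basis i ((T - {v}) \<union> nbhd v)) (differential i ((T - {v}) \<union> nbhd v)) (\<lambda>y. u (v # y))) x"
proof -
  define u_rest where "u_rest x = (if x \<in> basis (Suc i) (T - {v}) then u x else 0)" for x
  have "lincomb (basis (Suc i) T) (differential (Suc i) T) u_rest x =
      lincomb (basis (Suc i) (T - {v})) (differential (Suc i) (T - {v})) u x"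
    by (subst lincomb_differential_restrict[OF T _ lower_remove_max[OF T v v_max]])
      (auto simp: supp_in_def u_rest_def intro: lincomb_cong)
  moreover have "lincomb (basis (Suc i) T) (differential (Suc i) T) u x =
      lincomb (basis (Suc i) T) (differential (Suc i) T) u_rest x
      + lincomb (basis (Suc i) T) (differential (Suc i) T) (prepend v (\<lambda>y. u (v # y))) x"
    using vec_split_max(1)[OF assms] by (simp add: u_rest_def lincomb_add_vec[symmetric])
  ultimately show ?thesis
    using lincomb_differential_prepend[OF T v] vec_split_max(2)[OF assms] by (simp add: lower_max[OF T v v_max])
qed

end

definition differential_linear :: "nat \<Rightarrow> bool" where
  "differential_linear i \<longleftrightarrow> (\<forall>T\<subseteq>V. \<forall>w\<in>basis i T.
     supp_in (basis (i - 1) T) (differential i T w) \<and> linear_vec (differential i T w))"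

definition comparison_chain_map :: "nat \<Rightarrow> bool" where
  "comparison_chain_map i \<longleftrightarrow> (\<forall>T\<subseteq>V. \<forall>v\<in>V - T. \<forall>w\<in>basis i (T \<union> nbhd v).
     supp_in (basis i T) (comparison i T v w) \<and> linear_vec (comparison i T v w) \<and>
     (1 \<le> i \<longrightarrow> cong_quad (lincomb (basis i T) (differential i T) (comparison i T v w))
        (lincomb (basis (i - 1) (T \<union> nbhd v)) (comparison (i - 1) T v) (differential i (T \<union> nbhd v) w))))"

definition differential_square_zero :: "nat \<Rightarrow> bool" where
  "differential_square_zero i \<longleftrightarrow> (\<forall>T\<subseteq>V. \<forall>w\<in>basis (Suc i) T.
     cong_quad (lincomb (basis i T) (differential i T) (differential (Suc i) T w)) (\<lambda>x. 0))"

definition differential_exact :: "nat \<Rightarrow> bool" where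
  "differential_exact i \<longleftrightarrow> (\<forall>T\<subseteq>V. \<forall>u :: 'v list \<Rightarrow> ('v, 'k) mpoly.
     supp_in (basis i T) u \<and> poly_vec u \<and> cong_quad (lincomb (basis i T) (differential i T) u) (\<lambda>x. 0) \<longrightarrow>
     (\<exists>w. supp_in (basis (Suc i) T) w \<and> poly_vec w \<and>
          cong_quad u (lincomb (basis (Suc i) T) (differential (Suc i) T) w)))"

lemma differential_linear_0: "differential_linear 0"
  by (simp add: differential_linear_def supp_in_def linear_vec_def)

lemma differential_square_zero_0: "differential_square_zero 0"
  by (simp add: differential_square_zero_def cong_quad_def lincomb_def)

lemma comparison_chain_map_0: "comparison_chain_map 0"
  by (auto simp: comparison_chain_map_def supp_in_def linear_vec_def comparison_0)

lemma differential_linear_Suc: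
  assumes cmp: "comparison_chain_map i" and lin: "differential_linear i"
  shows "differential_linear (Suc i)"
  unfolding differential_linear_def
proof (intro allI impI ballI)
  fix T w assume T: "T \<subseteq> V" and "w \<in> basis (Suc i) T"
  from this(2) obtain t y where w: "w = t # y" and t: "t \<in> T" and y: "y \<in> basis i (lower T t \<union> nbhd t)"
    by (rule basis_SucE)
  have "t \<in> V - lower T t" using t T by (auto simp: lower_def)
  with cmp T y have c: "supp_in (basis i (lower T t)) (comparison i (lower T t) t y)"
      "linear_vec (comparison i (lower T t) t y)"
    using lower_subset unfolding comparison_chain_map_def by (meson subset_trans)+
  from lin y have d: "supp_in (basis (i - 1) (lower T t \<union> nbhd t)) (differential i (lower T t \<union> nbhd t) y)"
      "linear_vec (differential i (lower T t \<union> nbhd t) y)"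
    using lower_nbhd_subset[OF T] unfolding differential_linear_def by blast+
  have "supp_in (basis i T) (prepend t (differential i (lower T t \<union> nbhd t) y))"
  proof (cases i)
    case (Suc j)
    with t show ?thesis by (intro supp_in_prepend[OF d(1)]) (simp add: Cons_in_basis)
  qed (simp add: supp_in_def)
  then show "supp_in (basis (Suc i - 1) T) (differential (Suc i) T w) \<and> linear_vec (differential (Suc i) T w)"
    using supp_in_mono[OF c(1) basis_mono[OF lower_subset]] c(2) d(2)
    by (simp add: w differential_Suc_Cons supp_in_diff linear_vec_diff linear_vec_prepend)
qed

lemma differential_square_zero_Suc:
  assumes lin: "differential_linear (Suc i)" and cmp: "comparison_chain_map (Suc i)"
    and sq: "differential_square_zero i"
  shows "differential_square_zero (Suc i)"
  unfolding differential_square_zero_def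
proof (intro allI impI ballI)
  fix T w assume T: "T \<subseteq> V" and "w \<in> basis (Suc (Suc i)) T"
  from this(2) obtain t y where w: "w = t # y" and t: "t \<in> T" and y: "y \<in> basis (Suc i) (lower T t \<union> nbhd t)"
    by (rule basis_SucE)
  define T' U where "T' = lower T t" and "U = lower T t \<union> nbhd t"
  have T': "T' \<subseteq> V" and U: "U \<subseteq> V" and tV: "t \<in> V - T'"
    using T t lower_nbhd_subset[OF T] by (auto simp: T'_def U_def lower_def)
  define c z where "c = comparison (Suc i) T' t y" and "z = differential (Suc i) U y"
  from cmp T' tV y have c: "supp_in (basis (Suc i) T') c"
      "cong_quad (lincomb (basis (Suc i) T') (differential (Suc i) T') c) (lincomb (basis i U) (comparison i T' t) z)"
    unfolding comparison_chain_map_def c_def z_def U_def T'_def by auto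
  from lin U y have z: "supp_in (basis i U) z"
    unfolding differential_linear_def z_def U_def by auto
  from sq U y have dz: "cong_quad (lincomb (basis i U) (differential i U) z) (\<lambda>x. 0)"
    unfolding differential_square_zero_def z_def U_def by auto
  have "lincomb (basis (Suc i) T) (differential (Suc i) T) (differential (Suc (Suc i)) T w) x
      = (lincomb (basis (Suc i) T') (differential (Suc i) T') c x - lincomb (basis i U) (comparison i T' t) z x)
        + prepend t (lincomb (basis i U) (differential i U) z) x" for x
    using lincomb_differential_restrict[OF T lower_subset lower_lower c(1)[unfolded T'_def]]
      lincomb_differential_prepend[OF T t z[unfolded U_def]]
    by (simp add: w differential_Suc_Cons lincomb_diff_vec c_def z_def T'_def U_def)
  moreover have "cong_quad (\<lambda>x. (lincomb (basis (Suc i) T') (differential (Suc i) T') c x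
        - lincomb (basis i U) (comparison i T' t) z x) + prepend t (lincomb (basis i U) (differential i U) z) x) (\<lambda>x. 0)"
    using cong_quad_add[OF c(2)[unfolded cong_quad_def, folded cong_quad_zero_iff] cong_quad_prepend[OF dz, of t]]
    by (simp add: cong_quad_def)
  ultimately show "cong_quad (lincomb (basis (Suc i) T) (differential (Suc i) T) (differential (Suc (Suc i)) T w)) (\<lambda>x. 0)"
    by (simp add: cong_quad_def)
qed

lemma comparison_exists_1:
  assumes T: "T \<subseteq> V" and v: "v \<in> V - T" and w: "w \<in> basis (Suc 0) (T \<union> nbhd v)"
  shows "\<exists>y. comparison_spec (Suc 0) (differential (Suc 0)) (comparison 0) T v w y"
proof -
  obtain s where w_eq: "w = [s]" and s: "s \<in> T \<union> nbhd v"
    using w unfolding basis_1 by blast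
  define target where "target = lincomb (basis 0 (T \<union> nbhd v)) (comparison 0 T v) (differential (Suc 0) (T \<union> nbhd v) w)"
  have target: "target x = (if x = [] then var v * var s else 0)" for x
    by (simp add: target_def lincomb_def w_eq differential_1 comparison_0 mult.commute)
  show ?thesis
  proof (cases "s \<in> T")
    case True
    define y :: "'v list \<Rightarrow> ('v, 'k) mpoly" where "y x = (if x = [s] then var v else 0)" for x
    have "lincomb (basis (Suc 0) T) (differential (Suc 0) T) y x = target x" for x
      using True finite_subset[OF T finite_V]
      by (simp add: lincomb_def sum_basis_1 y_def differential_1 target if_distrib[of "\<lambda>c. c * _"] cong: if_cong)
    moreover have "supp_in (basis (Suc 0) T) y" "linear_vec y"
      using True v by (auto simp: y_def supp_in_def linear_vec_def basis_1)
    ultimately show ?thesis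
      by (intro exI[of _ y]) (simp add: comparison_spec_def cong_quad_def target_def)
  next
    case False
    with s v have "var v * var s \<in> quad_ideal"
      by (intro var_mult_var_in_quad_ideal) (auto simp: nbhd_def)
    then have "comparison_spec (Suc 0) (differential (Suc 0)) (comparison 0) T v w (\<lambda>x. 0)"
      using target unfolding target_def
      by (simp add: comparison_spec_def cong_quad_def linear_vec_zero supp_in_def gen_ideal_uminus)
    then show ?thesis by blast
  qed
qed

text \<open>For \<open>i \<ge> 1\<close>, the composite of \<open>d\<^sub>i\<^sub>+\<^sub>1\<close> on \<open>T \<union> nbhd v\<close> with the comparison map in degree \<open>i\<close>
  is a cycle of quadratic forms, which exactness at \<open>i\<close> lets us lift to the comparison map in
  degree \<open>i + 1\<close>.\<close>

lemma comparison_target_cycle: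
  assumes lin: "differential_linear (Suc i)" and cmp: "comparison_chain_map i"
    and cmp_prev: "comparison_chain_map (i - 1)" and sq: "differential_square_zero i" and "1 \<le> i"
    and T: "T \<subseteq> V" and v: "v \<in> V - T" and w: "w \<in> basis (Suc i) (T \<union> nbhd v)"
  defines "z \<equiv> lincomb (basis i (T \<union> nbhd v)) (comparison i T v) (differential (Suc i) (T \<union> nbhd v) w)"
  shows "supp_in (basis i T) z" and "poly_vec z" and "\<And>x. homog 2 (z x)"
    and "cong_quad (lincomb (basis i T) (differential i T) z) (\<lambda>x. 0)"
proof -
  define U where "U = T \<union> nbhd v"
  have U: "U \<subseteq> V" using T nbhd_subset unfolding U_def by blast
  define D where "D = differential (Suc i) U w"
  have D: "linear_vec D" using lin U w unfolding differential_linear_def D_def U_def by auto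
  have C: "supp_in (basis i T) (comparison i T v y)" "linear_vec (comparison i T v y)"
      "cong_quad (lincomb (basis i T) (differential i T) (comparison i T v y))
        (lincomb (basis (i - 1) U) (comparison (i - 1) T v) (differential i U y))"
    if "y \<in> basis i U" for y
    using cmp T v that \<open>1 \<le> i\<close> unfolding comparison_chain_map_def U_def by auto
  have C_prev: "linear_vec (comparison (i - 1) T v y)" if "y \<in> basis (i - 1) U" for y
    using cmp_prev T v that unfolding comparison_chain_map_def U_def by auto
  have z: "z = lincomb (basis i U) (comparison i T v) D"
    unfolding z_def D_def U_def ..
  show "supp_in (basis i T) z" unfolding z using C(1) by (rule supp_in_lincomb)
  show "poly_vec z" unfolding z
    using C(2) by (intro poly_vec_lincomb linear_vec_poly_vec[OF D]) (auto simp: linear_vec_def)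
  show "homog 2 (z x)" for x
    using homog_lincomb[of "basis i U" 1 D 1 "comparison i T v" x] C(2) D
    unfolding z by (simp add: linear_vec_def numeral_2_eq_2)
  let ?P' = "comparison (i - 1) T v"
  have "cong_quad (lincomb (basis i U) (\<lambda>y. lincomb (basis i T) (differential i T) (comparison i T v y)) D)
      (lincomb (basis i U) (\<lambda>y. lincomb (basis (i - 1) U) ?P' (differential i U y)) D)"
    using C(3) by (intro cong_quad_lincomb_mat linear_vec_poly_vec[OF D])
  then have c1: "cong_quad (lincomb (basis i T) (differential i T) z)
      (lincomb (basis (i - 1) U) ?P' (lincomb (basis i U) (differential i U) D))"
    unfolding z lincomb_lincomb .
  have c2: "cong_quad (lincomb (basis (i - 1) U) ?P' (lincomb (basis i U) (differential i U) D))
      (lincomb (basis (i - 1) U) ?P' (\<lambda>x. 0))"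
    using sq U w C_prev unfolding differential_square_zero_def D_def U_def
    by (intro cong_quad_lincomb_vec) (auto simp: linear_vec_def)
  show "cong_quad (lincomb (basis i T) (differential i T) z) (\<lambda>x. 0)"
    using cong_quad_trans[OF c1 c2] by simp
qed

lemma comparison_exists_Suc:
  assumes lin: "differential_linear (Suc i)" and cmp: "comparison_chain_map i"
    and cmp_prev: "comparison_chain_map (i - 1)" and sq: "differential_square_zero i"
    and ex: "differential_exact i" and "1 \<le> i"
    and T: "T \<subseteq> V" and v: "v \<in> V - T" and w: "w \<in> basis (Suc i) (T \<union> nbhd v)"
  shows "\<exists>y. comparison_spec (Suc i) (differential (Suc i)) (comparison i) T v w y"
proof -
  define z where "z = lincomb (basis i (T \<union> nbhd v)) (comparison i T v) (differential (Suc i) (T \<union> nbhd v) w)"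
  note z = comparison_target_cycle[OF lin cmp cmp_prev sq \<open>1 \<le> i\<close> T v w, folded z_def]
  obtain y where y: "supp_in (basis (Suc i) T) y" "poly_vec y"
      "cong_quad z (lincomb (basis (Suc i) T) (differential (Suc i) T) y)"
    using ex T z(1,2,4) unfolding differential_exact_def by blast
  have "cong_quad (lincomb (basis (Suc i) T) (differential (Suc i) T) (\<lambda>x. homog_comp 1 (y x))) z"
  proof (rule cong_quad_homog_comp[OF _ _ cong_quad_sym[OF y(3)]])
    show "\<And>x. homog (Suc 1) (z x)" using z(3) by (simp add: numeral_2_eq_2)
    show "\<And>w. w \<in> basis (Suc i) T \<Longrightarrow> linear_vec (differential (Suc i) T w)"
      using lin T unfolding differential_linear_def by blast
  qed
  moreover have "supp_in (basis (Suc i) T) (\<lambda>x. homog_comp 1 (y x))"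
    using y(1) by (simp add: supp_in_def)
  moreover have "linear_vec (\<lambda>x. homog_comp 1 (y x))"
    using y(2) by (auto simp: linear_vec_def poly_vec_def)
  ultimately show ?thesis
    unfolding comparison_spec_def z_def by auto
qed

lemma comparison_chain_map_Suc:
  assumes lin: "differential_linear (Suc i)" and cmp: "comparison_chain_map i"
    and sq: "differential_square_zero i" and ex: "1 \<le> i \<Longrightarrow> differential_exact i"
    and cmp_prev: "1 \<le> i \<Longrightarrow> comparison_chain_map (i - 1)"
  shows "comparison_chain_map (Suc i)"
  unfolding comparison_chain_map_def
proof (intro allI impI ballI)
  fix T v w assume T: "T \<subseteq> V" and v: "v \<in> V - T" and w: "w \<in> basis (Suc i) (T \<union> nbhd v)"
  have "\<exists>y. comparison_spec (Suc i) (differential (Suc i)) (comparison i) T v w y"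
  proof (cases i)
    case 0
    with T v w show ?thesis by (simp add: comparison_exists_1)
  next
    case (Suc j)
    then have "1 \<le> i" by simp
    with assms T v w show ?thesis by (intro comparison_exists_Suc) auto
  qed
  from comparison_Suc_spec[OF this]
  show "supp_in (basis (Suc i) T) (comparison (Suc i) T v w) \<and> linear_vec (comparison (Suc i) T v w) \<and>
      (1 \<le> Suc i \<longrightarrow> cong_quad (lincomb (basis (Suc i) T) (differential (Suc i) T) (comparison (Suc i) T v w))
        (lincomb (basis (Suc i - 1) (T \<union> nbhd v)) (comparison (Suc i - 1) T v) (differential (Suc i) (T \<union> nbhd v) w)))"
    by (simp add: comparison_spec_def)
qed

section \<open>Exactness of the mapping cone\<close>

text \<open>Let \<open>v\<close> have the largest rank in \<open>T\<close> and split a cycle for \<open>T\<close> as \<open>u = u' + prepend v b\<close>. Then \<open>b\<close> is a cycle for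
  \<open>T - {v} \<union> nbhd v\<close>, say \<open>b \<equiv> d \<beta>\<close>, and \<open>u' + P \<beta>\<close> is a cycle for \<open>T - {v}\<close>, where \<open>P\<close> is the
  comparison map for \<open>x\<^sub>v\<close>. If \<open>u' + P \<beta> \<equiv> d w\<close>, then \<open>u \<equiv> d (w - prepend v \<beta>)\<close>.\<close>

lemma lincomb_differential_1:
  "lincomb (basis (Suc 0) T) (differential (Suc 0) T) u x = (if x = [] then \<Sum>s\<in>T. u [s] * var s else 0)"
  by (simp add: lincomb_def sum_basis_1 differential_1 if_distrib[of "\<lambda>c. _ * c"] cong: if_cong)

lemma Cons_notin_basis: "v \<notin> T \<Longrightarrow> v # y \<notin> basis i T"
  by (cases i) (auto simp: Cons_in_basis)

context
  fixes T v assumes T: "T \<subseteq> V" and v: "v \<in> T" and v_max: "\<And>u. u \<in> T \<Longrightarrow> rank u \<le> rank v"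
begin

lemma cycle_split_max:
  assumes lin: "differential_linear (Suc i)" and cmp: "comparison_chain_map i"
    and u: "supp_in (basis (Suc i) T) u"
    and cycle: "cong_quad (lincomb (basis (Suc i) T) (differential (Suc i) T) u) (\<lambda>x. 0)"
  shows "cong_quad (\<lambda>x. lincomb (basis (Suc i) (T - {v})) (differential (Suc i) (T - {v})) u x
            + lincomb (basis i ((T - {v}) \<union> nbhd v)) (comparison i (T - {v}) v) (\<lambda>y. u (v # y)) x) (\<lambda>x. 0)"
    and "cong_quad (lincomb (basis i ((T - {v}) \<union> nbhd v)) (differential i ((T - {v}) \<union> nbhd v)) (\<lambda>y. u (v # y))) (\<lambda>x. 0)"
proof -
  let ?A = "lincomb (basis (Suc i) (T - {v})) (differential (Suc i) (T - {v})) u"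
  let ?\<Phi> = "lincomb (basis i ((T - {v}) \<union> nbhd v)) (comparison i (T - {v}) v) (\<lambda>y. u (v # y))"
  have T': "T - {v} \<subseteq> V" and vV: "v \<in> V - (T - {v})" using T v by auto
  have "supp_in (basis i (T - {v})) ?A"
    using lin T' unfolding differential_linear_def by (intro supp_in_lincomb) auto
  moreover have "supp_in (basis i (T - {v})) ?\<Phi>"
    using cmp T' vV unfolding comparison_chain_map_def by (intro supp_in_lincomb) auto
  ultimately have A\<Phi>: "?A (v # y) = 0" "?\<Phi> (v # y) = 0" for y
    using Cons_notin_basis[of v "T - {v}"] unfolding supp_in_def by auto
  have split: "lincomb (basis (Suc i) T) (differential (Suc i) T) u x = ?A x + ?\<Phi> x
      - prepend v (lincomb (basis i ((T - {v}) \<union> nbhd v)) (differential i ((T - {v}) \<union> nbhd v)) (\<lambda>y. u (v # y))) x" for x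
    by (rule lincomb_differential_split_max[OF T v v_max u])
  show "cong_quad (\<lambda>x. ?A x + ?\<Phi> x) (\<lambda>x. 0)"
    unfolding cong_quad_zero_iff
  proof
    fix x
    show "?A x + ?\<Phi> x \<in> quad_ideal"
      using cycle[unfolded cong_quad_zero_iff, rule_format, of x] split[of x] A\<Phi>
      by (cases x) (auto split: if_splits)
  qed
  show "cong_quad (lincomb (basis i ((T - {v}) \<union> nbhd v)) (differential i ((T - {v}) \<union> nbhd v)) (\<lambda>y. u (v # y))) (\<lambda>x. 0)"
    unfolding cong_quad_zero_iff
  proof
    fix y
    show "lincomb (basis i ((T - {v}) \<union> nbhd v)) (differential i ((T - {v}) \<union> nbhd v)) (\<lambda>y. u (v # y)) y \<in> quad_ideal"
      using cycle[unfolded cong_quad_zero_iff, rule_format, of "v # y"] split[of "v # y"] A\<Phi>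
      by (auto dest: gen_ideal_uminus)
  qed
qed

text \<open>In degree one the cycle condition says \<open>x\<^sub>v u\<^sub>v \<in> I\<^bsub>T - {v}\<^esub>\<close>, and the colon ideal
  computation turns this into a lift of \<open>u\<^sub>v\<close> along \<open>d\<^sub>1\<close> on \<open>(T - {v}) \<union> nbhd v\<close>.\<close>

lemma cycle_tail_lift_0:
  assumes u: "supp_in (basis (Suc 0) T) u" "poly_vec u"
    and cycle: "cong_quad (lincomb (basis (Suc 0) T) (differential (Suc 0) T) u) (\<lambda>x. 0)"
  shows "\<exists>\<beta>. supp_in (basis (Suc 0) ((T - {v}) \<union> nbhd v)) \<beta> \<and> poly_vec \<beta> \<and>
      cong_quad (\<lambda>y. u (v # y)) (lincomb (basis (Suc 0) ((T - {v}) \<union> nbhd v)) (differential (Suc 0) ((T - {v}) \<union> nbhd v)) \<beta>)"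
proof -
  define U where "U = (T - {v}) \<union> nbhd v"
  have T': "T - {v} \<subseteq> V" and U: "U \<subseteq> V" and vV: "v \<in> V" "v \<notin> T - {v}"
    using T v nbhd_subset unfolding U_def by auto
  have pu: "poly_over V (u x)" for x using u(2) by (simp add: poly_vec_def)
  have "(\<Sum>s\<in>T. u [s] * var s) \<in> quad_ideal"
    using cycle unfolding cong_quad_zero_iff by (metis lincomb_differential_1)
  moreover have "(\<Sum>s\<in>T. u [s] * var s) = var v * u [v] - (\<Sum>s\<in>T - {v}. (- u [s]) * var s)"
    using finite_subset[OF T finite_V] v by (simp add: sum.remove sum_negf mult.commute)
  ultimately have "var v * u [v] \<in> var_ideal (T - {v})"
    using pu vV by (subst var_ideal_iff[OF T']) (auto intro!: exI[of _ "\<lambda>s. - u [s]"])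
  then have "u [v] \<in> var_ideal U"
    unfolding U_def using var_ideal_colon[OF T' vV(2) pu] by blast
  then obtain c where c: "\<forall>t. poly_over V (c t)" "u [v] - (\<Sum>t\<in>U. c t * var t) \<in> quad_ideal"
    using var_ideal_iff[OF U] by blast
  define \<beta> where "\<beta> x = (if x \<in> basis (Suc 0) U then c (hd x) else 0)" for x
  have "supp_in (basis (Suc 0) U) \<beta>" "poly_vec \<beta>"
    using c(1) by (simp_all add: \<beta>_def supp_in_def poly_vec_def)
  moreover have "cong_quad (\<lambda>y. u (v # y)) (lincomb (basis (Suc 0) U) (differential (Suc 0) U) \<beta>)"
    unfolding cong_quad_def lincomb_differential_1
  proof
    fix x
    have "(\<Sum>s\<in>U. \<beta> [s] * var s) = (\<Sum>t\<in>U. c t * var t)"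
      by (rule sum.cong) (auto simp: \<beta>_def basis_1)
    moreover have "u (v # x) = 0" if "x \<noteq> []"
      using u(1) that unfolding supp_in_def basis_1 by auto
    ultimately show "u (v # x) - (if x = [] then \<Sum>s\<in>U. \<beta> [s] * var s else 0) \<in> quad_ideal"
      using c(2) by auto
  qed
  ultimately show ?thesis unfolding U_def by blast
qed

lemma cone_correction_cycle:
  assumes cmp: "comparison_chain_map i" "comparison_chain_map (Suc i)"
    and cycle: "cong_quad (\<lambda>x. lincomb (basis (Suc i) (T - {v})) (differential (Suc i) (T - {v})) u x
            + lincomb (basis i ((T - {v}) \<union> nbhd v)) (comparison i (T - {v}) v) (\<lambda>y. u (v # y)) x) (\<lambda>x. 0)"
    and \<beta>: "poly_vec \<beta>"
      "cong_quad (\<lambda>y. u (v # y)) (lincomb (basis (Suc i) ((T - {v}) \<union> nbhd v)) (differential (Suc i) ((T - {v}) \<union> nbhd v)) \<beta>)"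
  shows "cong_quad (lincomb (basis (Suc i) (T - {v})) (differential (Suc i) (T - {v}))
      (\<lambda>x. (if x \<in> basis (Suc i) (T - {v}) then u x else 0)
         + lincomb (basis (Suc i) ((T - {v}) \<union> nbhd v)) (comparison (Suc i) (T - {v}) v) \<beta> x)) (\<lambda>x. 0)"
proof -
  define T' U where "T' = T - {v}" and "U = (T - {v}) \<union> nbhd v"
  have T': "T' \<subseteq> V" and vV: "v \<in> V - T'" using T v by (auto simp: T'_def)
  define P\<beta> where "P\<beta> = lincomb (basis (Suc i) U) (comparison (Suc i) T' v) \<beta>"
  have C: "cong_quad (lincomb (basis (Suc i) T') (differential (Suc i) T') (comparison (Suc i) T' v y))
      (lincomb (basis i U) (comparison i T' v) (differential (Suc i) U y))" if "y \<in> basis (Suc i) U" for y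
    using cmp(2) T' vV that unfolding comparison_chain_map_def U_def T'_def by auto
  have C_poly: "poly_over V (comparison i T' v y x)" if "y \<in> basis i U" for y x
    using cmp(1) T' vV that unfolding comparison_chain_map_def linear_vec_def U_def T'_def by auto
  have "cong_quad (lincomb (basis (Suc i) T') (differential (Suc i) T') P\<beta>)
      (lincomb (basis i U) (comparison i T' v) (lincomb (basis (Suc i) U) (differential (Suc i) U) \<beta>))"
    unfolding P\<beta>_def lincomb_lincomb[of "basis i U"] lincomb_lincomb[of "basis (Suc i) T'"]
    using C by (intro cong_quad_lincomb_mat \<beta>(1))
  moreover have "cong_quad (lincomb (basis i U) (comparison i T' v) (lincomb (basis (Suc i) U) (differential (Suc i) U) \<beta>))
      (lincomb (basis i U) (comparison i T' v) (\<lambda>y. u (v # y)))"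
    by (rule cong_quad_lincomb_vec[OF cong_quad_sym[OF \<beta>(2)[folded U_def T'_def]] C_poly])
  ultimately have "cong_quad (\<lambda>x. lincomb (basis (Suc i) T') (differential (Suc i) T') u x
        + lincomb (basis (Suc i) T') (differential (Suc i) T') P\<beta> x) (\<lambda>x. 0)"
    using cong_quad_trans[OF cong_quad_add[OF cong_quad_refl cong_quad_trans] cycle[folded T'_def U_def]]
    by blast
  moreover have "lincomb (basis (Suc i) T') (differential (Suc i) T') (\<lambda>x. (if x \<in> basis (Suc i) T' then u x else 0) + P\<beta> x) x
      = lincomb (basis (Suc i) T') (differential (Suc i) T') u x + lincomb (basis (Suc i) T') (differential (Suc i) T') P\<beta> x" for x
    by (simp add: lincomb_add_vec lincomb_def)
  ultimately show ?thesis unfolding P\<beta>_def T'_def U_def by (simp add: cong_quad_def)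
qed

lemma cone_lift:
  assumes u: "supp_in (basis (Suc i) T) u"
    and \<beta>: "supp_in (basis (Suc i) ((T - {v}) \<union> nbhd v)) \<beta>"
      "cong_quad (\<lambda>y. u (v # y)) (lincomb (basis (Suc i) ((T - {v}) \<union> nbhd v)) (differential (Suc i) ((T - {v}) \<union> nbhd v)) \<beta>)"
    and w: "supp_in (basis (Suc (Suc i)) (T - {v})) w"
      "cong_quad (\<lambda>x. (if x \<in> basis (Suc i) (T - {v}) then u x else 0)
         + lincomb (basis (Suc i) ((T - {v}) \<union> nbhd v)) (comparison (Suc i) (T - {v}) v) \<beta> x)
         (lincomb (basis (Suc (Suc i)) (T - {v})) (differential (Suc (Suc i)) (T - {v})) w)"
  shows "cong_quad u (lincomb (basis (Suc (Suc i)) T) (differential (Suc (Suc i)) T) (\<lambda>x. w x - prepend v \<beta> x))"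
  unfolding cong_quad_def
proof
  fix x
  define U where "U = (T - {v}) \<union> nbhd v"
  define u' where "u' x = (if x \<in> basis (Suc i) (T - {v}) then u x else 0)" for x
  define D\<beta> where "D\<beta> = lincomb (basis (Suc i) U) (differential (Suc i) U) \<beta>"
  define P\<beta> where "P\<beta> = lincomb (basis (Suc i) U) (comparison (Suc i) (T - {v}) v) \<beta>"
  define Dw where "Dw = lincomb (basis (Suc (Suc i)) (T - {v})) (differential (Suc (Suc i)) (T - {v})) w"
  have Dw_split: "lincomb (basis (Suc (Suc i)) T) (differential (Suc (Suc i)) T) (\<lambda>x. w x - prepend v \<beta> x) x
      = Dw x - (P\<beta> x - prepend v D\<beta> x)"
    using lincomb_differential_restrict[OF T _ lower_remove_max[OF T v v_max] w(1)]
      lincomb_differential_prepend[OF T v, of "Suc i" \<beta>] \<beta>(1)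
    by (auto simp: lincomb_diff_vec lower_max[OF T v v_max] U_def Dw_def P\<beta>_def D\<beta>_def)
  have u_split: "u x = u' x + prepend v (\<lambda>y. u (v # y)) x"
    unfolding u'_def by (rule vec_split_max(1)[OF T v v_max u])
  have "(u' x + P\<beta> x - Dw x) + (prepend v (\<lambda>y. u (v # y)) x - prepend v D\<beta> x) \<in> quad_ideal"
    using w(2) cong_quad_prepend[OF \<beta>(2), of v] unfolding cong_quad_def U_def u'_def P\<beta>_def Dw_def D\<beta>_def
    by (intro gen_ideal_add) auto
  moreover have "u x - lincomb (basis (Suc (Suc i)) T) (differential (Suc (Suc i)) T) (\<lambda>x. w x - prepend v \<beta> x) x
      = (u' x + P\<beta> x - Dw x) + (prepend v (\<lambda>y. u (v # y)) x - prepend v D\<beta> x)"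
    by (simp only: Dw_split u_split) (simp add: algebra_simps)
  ultimately show "u x - lincomb (basis (Suc (Suc i)) T) (differential (Suc (Suc i)) T) (\<lambda>x. w x - prepend v \<beta> x) x \<in> quad_ideal"
    by simp
qed

lemma cycle_tail_lift:
  assumes lin: "differential_linear (Suc i)" and cmp: "comparison_chain_map i"
    and ex: "1 \<le> i \<Longrightarrow> differential_exact i"
    and u: "supp_in (basis (Suc i) T) u" "poly_vec u"
      "cong_quad (lincomb (basis (Suc i) T) (differential (Suc i) T) u) (\<lambda>x. 0)"
  shows "\<exists>\<beta>. supp_in (basis (Suc i) ((T - {v}) \<union> nbhd v)) \<beta> \<and> poly_vec \<beta> \<and>
      cong_quad (\<lambda>y. u (v # y)) (lincomb (basis (Suc i) ((T - {v}) \<union> nbhd v)) (differential (Suc i) ((T - {v}) \<union> nbhd v)) \<beta>)"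
proof (cases i)
  case 0
  with cycle_tail_lift_0 u show ?thesis by simp
next
  case (Suc j)
  then have "differential_exact i" using ex by simp
  moreover have "(T - {v}) \<union> nbhd v \<subseteq> V" using T nbhd_subset by blast
  moreover have "supp_in (basis i ((T - {v}) \<union> nbhd v)) (\<lambda>y. u (v # y))" "poly_vec (\<lambda>y. u (v # y))"
    using vec_split_max(2)[OF T v v_max u(1)] u(2) by (simp_all add: poly_vec_def)
  ultimately show ?thesis
    using cycle_split_max(2)[OF lin cmp u(1,3)] unfolding differential_exact_def by blast
qed

lemma cone_correction_vec:
  assumes cmp: "comparison_chain_map (Suc i)" and "poly_vec u" "poly_vec \<beta>"
  shows "supp_in (basis (Suc i) (T - {v})) (\<lambda>x. (if x \<in> basis (Suc i) (T - {v}) then u x else 0)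
         + lincomb (basis (Suc i) ((T - {v}) \<union> nbhd v)) (comparison (Suc i) (T - {v}) v) \<beta> x)"
    and "poly_vec (\<lambda>x. (if x \<in> basis (Suc i) (T - {v}) then u x else 0)
         + lincomb (basis (Suc i) ((T - {v}) \<union> nbhd v)) (comparison (Suc i) (T - {v}) v) \<beta> x)"
proof -
  have C: "supp_in (basis (Suc i) (T - {v})) (comparison (Suc i) (T - {v}) v y)"
      "linear_vec (comparison (Suc i) (T - {v}) v y)"
    if "y \<in> basis (Suc i) ((T - {v}) \<union> nbhd v)" for y
  proof -
    have "T - {v} \<subseteq> V" "v \<in> V - (T - {v})" using T v by auto
    with cmp that show "supp_in (basis (Suc i) (T - {v})) (comparison (Suc i) (T - {v}) v y)"
        "linear_vec (comparison (Suc i) (T - {v}) v y)"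
      unfolding comparison_chain_map_def by blast+
  qed
  show "supp_in (basis (Suc i) (T - {v})) (\<lambda>x. (if x \<in> basis (Suc i) (T - {v}) then u x else 0)
         + lincomb (basis (Suc i) ((T - {v}) \<union> nbhd v)) (comparison (Suc i) (T - {v}) v) \<beta> x)"
    using C(1) by (intro supp_in_add supp_in_lincomb) (auto simp: supp_in_def)
  show "poly_vec (\<lambda>x. (if x \<in> basis (Suc i) (T - {v}) then u x else 0)
         + lincomb (basis (Suc i) ((T - {v}) \<union> nbhd v)) (comparison (Suc i) (T - {v}) v) \<beta> x)"
    using assms(2,3) C(2) unfolding poly_vec_def lincomb_def linear_vec_def
    by (auto intro!: poly_over_add poly_over_sum poly_over_mult)
qed

lemma cone_lift_vec:
  assumes "supp_in (basis (Suc i) ((T - {v}) \<union> nbhd v)) \<beta>" "poly_vec \<beta>"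
    and "supp_in (basis (Suc (Suc i)) (T - {v})) w" "poly_vec w"
  shows "supp_in (basis (Suc (Suc i)) T) (\<lambda>x. w x - prepend v \<beta> x)"
    and "poly_vec (\<lambda>x. w x - prepend v \<beta> x)"
proof -
  have "supp_in (basis (Suc (Suc i)) T) (prepend v \<beta>)"
    using assms(1) v by (intro supp_in_prepend) (auto simp: Cons_in_basis lower_max[OF T v v_max])
  then show "supp_in (basis (Suc (Suc i)) T) (\<lambda>x. w x - prepend v \<beta> x)"
    using supp_in_mono[OF assms(3) basis_mono[of "T - {v}" T]] by (intro supp_in_diff) auto
  show "poly_vec (\<lambda>x. w x - prepend v \<beta> x)"
    using assms(2,4) by (auto simp: poly_vec_def prepend_def split: list.splits)
qed

end

lemma exists_max_rank: "finite T \<Longrightarrow> T \<noteq> {} \<Longrightarrow> \<exists>v\<in>T. \<forall>u\<in>T. rank u \<le> rank v"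
  using Max_in[of "rank ` T"] Max_ge[of "rank ` T"] by fastforce

lemma differential_exact_Suc:
  assumes lin: "differential_linear (Suc i)"
    and cmp: "comparison_chain_map i" "comparison_chain_map (Suc i)"
    and ex: "1 \<le> i \<Longrightarrow> differential_exact i"
  shows "differential_exact (Suc i)"
proof -
  have "\<exists>w. supp_in (basis (Suc (Suc i)) T) w \<and> poly_vec w \<and>
      cong_quad u (lincomb (basis (Suc (Suc i)) T) (differential (Suc (Suc i)) T) w)"
    if "T \<subseteq> V" "supp_in (basis (Suc i) T) u" "poly_vec u"
      "cong_quad (lincomb (basis (Suc i) T) (differential (Suc i) T) u) (\<lambda>x. 0)" for T and u :: "'v list \<Rightarrow> ('v, 'k) mpoly"
    using that
  proof (induction "card T" arbitrary: T u rule: less_induct)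
    case less
    note T = less.prems(1) and u = less.prems(2-4)
    show ?case
    proof (cases "T = {}")
      case True
      with u(1) have "u = (\<lambda>x. 0)" by (simp add: basis_empty supp_in_def fun_eq_iff)
      then show ?thesis by (intro exI[of _ "\<lambda>x. 0"]) (simp add: supp_in_def poly_vec_def)
    next
      case False
      have finT: "finite T" using finite_subset[OF T finite_V] .
      obtain v where v: "v \<in> T" and v_max: "\<And>u. u \<in> T \<Longrightarrow> rank u \<le> rank v"
        using exists_max_rank[OF finT False] by blast
      obtain \<beta> where \<beta>: "supp_in (basis (Suc i) ((T - {v}) \<union> nbhd v)) \<beta>" "poly_vec \<beta>"
        "cong_quad (\<lambda>y. u (v # y)) (lincomb (basis (Suc i) ((T - {v}) \<union> nbhd v)) (differential (Suc i) ((T - {v}) \<union> nbhd v)) \<beta>)"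
        using cycle_tail_lift[OF T v v_max lin cmp(1) ex u] by blast
      define r where "r x = (if x \<in> basis (Suc i) (T - {v}) then u x else 0)
         + lincomb (basis (Suc i) ((T - {v}) \<union> nbhd v)) (comparison (Suc i) (T - {v}) v) \<beta> x" for x
      have "card (T - {v}) < card T" using finT v by (rule card_Diff1_less)
      moreover note cone_correction_vec[OF T v v_max cmp(2) u(2) \<beta>(2), folded r_def]
      moreover have "cong_quad (lincomb (basis (Suc i) (T - {v})) (differential (Suc i) (T - {v})) r) (\<lambda>x. 0)"
        unfolding r_def
        using cone_correction_cycle[OF T v v_max cmp cycle_split_max(1)[OF T v v_max lin cmp(1) u(1,3)] \<beta>(2,3)] .
      ultimately obtain w where w: "supp_in (basis (Suc (Suc i)) (T - {v})) w" "poly_vec w"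
          "cong_quad r (lincomb (basis (Suc (Suc i)) (T - {v})) (differential (Suc (Suc i)) (T - {v})) w)"
        using less.hyps T by blast
      show ?thesis
        using cone_lift_vec[OF T v v_max \<beta>(1,2) w(1,2)] cone_lift[OF T v v_max u(1) \<beta>(1,3) w(1) w(3)[unfolded r_def]]
        by blast
    qed
  qed
  then show ?thesis unfolding differential_exact_def by blast
qed

lemma complex_invariants:
  "differential_linear i \<and> differential_linear (Suc i) \<and> comparison_chain_map i \<and>
   differential_square_zero i \<and> (1 \<le> i \<longrightarrow> differential_exact i) \<and> comparison_chain_map (i - 1)"
proof (induction i)
  case 0
  then show ?case
    using differential_linear_Suc[OF comparison_chain_map_0 differential_linear_0]
    by (simp add: differential_linear_0 comparison_chain_map_0 differential_square_zero_0)
next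
  case (Suc i)
  then have lin: "differential_linear (Suc i)" and cmp: "comparison_chain_map (Suc i)"
    using comparison_chain_map_Suc by auto
  then show ?case
    using Suc differential_linear_Suc[OF cmp lin] differential_square_zero_Suc[OF lin cmp]
      differential_exact_Suc[OF lin _ cmp] by auto
qed

corollary differential_linear: "differential_linear i"
  using complex_invariants by blast

corollary differential_square_zero: "differential_square_zero i"
  using complex_invariants by blast

corollary differential_exact: "1 \<le> i \<Longrightarrow> differential_exact i"
  using complex_invariants by blast

definition basis_enum :: "nat \<Rightarrow> nat \<Rightarrow> 'v list" where
  "basis_enum i = (SOME f. bij_betw f {..<card (basis i V)} (basis i V))"

definition vec_of_coeffs :: "nat \<Rightarrow> (nat \<Rightarrow> ('v, 'k) mpoly) \<Rightarrow> 'v list \<Rightarrow> ('v, 'k) mpoly" where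
  "vec_of_coeffs i u w = (if w \<in> basis i V then u (inv_into {..<card (basis i V)} (basis_enum i) w) else 0)"

definition res_matrix :: "nat \<Rightarrow> nat \<Rightarrow> nat \<Rightarrow> ('v, 'k) mpoly" where
  "res_matrix i r c = differential i V (basis_enum i c) (basis_enum (i - 1) r)"

lemma bij_betw_basis_enum: "bij_betw (basis_enum i) {..<card (basis i V)} (basis i V)"
proof -
  have "\<exists>f. bij_betw f {..<card (basis i V)} (basis i V)"
    using ex_bij_betw_nat_finite[OF finite_basis[OF order_refl]] by (simp add: atLeast0LessThan)
  then show ?thesis unfolding basis_enum_def by (rule someI_ex)
qed

lemma basis_enum_in_basis: "c < card (basis i V) \<Longrightarrow> basis_enum i c \<in> basis i V"
  using bij_betw_basis_enum[of i] by (auto dest: bij_betw_apply)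

lemma basis_enum_0: "basis_enum 0 0 = []"
  using basis_enum_in_basis[of 0 0] by simp

lemma sum_basis_enum: "(\<Sum>c<card (basis i V). g (basis_enum i c)) = (\<Sum>w\<in>basis i V. g w)"
  by (rule sum.reindex_bij_betw[OF bij_betw_basis_enum])

lemma vec_of_coeffs_basis_enum: "c < card (basis i V) \<Longrightarrow> vec_of_coeffs i u (basis_enum i c) = u c"
  using bij_betw_basis_enum[of i]
  by (simp add: vec_of_coeffs_def basis_enum_in_basis bij_betw_inv_into_left)

lemma poly_vec_vec_of_coeffs:
  "(\<And>c. c < card (basis i V) \<Longrightarrow> poly_over V (u c)) \<Longrightarrow> poly_vec (vec_of_coeffs i u)"
  using bij_betw_inv_into[OF bij_betw_basis_enum[of i]]
  by (auto simp: poly_vec_def vec_of_coeffs_def dest: bij_betw_apply)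

lemma sum_res_matrix:
  "(\<Sum>c<card (basis i V). res_matrix i r c * y (basis_enum i c))
     = lincomb (basis i V) (differential i V) y (basis_enum (i - 1) r)"
  using sum_basis_enum[where i = i and g = "\<lambda>w. y w * differential i V w (basis_enum (i - 1) r)"]
  by (simp add: res_matrix_def lincomb_def mult.commute)

lemma res_matrix_linear:
  assumes "1 \<le> i" "r < card (basis (i - 1) V)" "c < card (basis i V)"
  shows "poly_over V (res_matrix i r c) \<and> homog 1 (res_matrix i r c)"
  using differential_linear[of i, unfolded differential_linear_def, rule_format, OF order_refl basis_enum_in_basis[OF assms(3)]]
  by (simp add: linear_vec_def res_matrix_def)

lemma res_augmentation_exact:
  "p \<in> gen_ideal V (var ` V) \<longleftrightarrow>
    (\<exists>u. (\<forall>c<card (basis 1 V). poly_over V (u c)) \<and> p - (\<Sum>c<card (basis 1 V). res_matrix 1 0 c * u c) \<in> quad_ideal)"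
proof -
  have matrix: "(\<Sum>c<card (basis 1 V). res_matrix 1 0 c * y (basis_enum 1 c)) = (\<Sum>t\<in>V. y [t] * var t)" for y
    using sum_res_matrix[of 1 0 y] by (simp add: lincomb_differential_1 basis_enum_0)
  show ?thesis
    unfolding var_ideal_all[symmetric] var_ideal_iff[OF order_refl]
  proof
    assume "\<exists>u. (\<forall>t. poly_over V (u t)) \<and> p - (\<Sum>t\<in>V. u t * var t) \<in> quad_ideal"
    then obtain u where "\<forall>t. poly_over V (u t)" "p - (\<Sum>t\<in>V. u t * var t) \<in> quad_ideal" by blast
    then show "\<exists>u. (\<forall>c<card (basis 1 V). poly_over V (u c)) \<and> p - (\<Sum>c<card (basis 1 V). res_matrix 1 0 c * u c) \<in> quad_ideal"
      using matrix[of "\<lambda>w. u (hd w)"] by (intro exI[of _ "\<lambda>c. u (hd (basis_enum 1 c))"]) simp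
  next
    assume "\<exists>u. (\<forall>c<card (basis 1 V). poly_over V (u c)) \<and> p - (\<Sum>c<card (basis 1 V). res_matrix 1 0 c * u c) \<in> quad_ideal"
    then obtain u where u: "\<forall>c<card (basis 1 V). poly_over V (u c)"
        "p - (\<Sum>c<card (basis 1 V). res_matrix 1 0 c * u c) \<in> quad_ideal" by blast
    have "(\<Sum>c<card (basis 1 V). res_matrix 1 0 c * u c) = (\<Sum>t\<in>V. vec_of_coeffs 1 u [t] * var t)"
      unfolding matrix[symmetric] by (rule sum.cong) (simp_all add: vec_of_coeffs_basis_enum)
    moreover have "poly_over V (vec_of_coeffs 1 u [t])" for t
      using poly_vec_vec_of_coeffs[of 1 u] u(1) by (simp add: poly_vec_def)
    ultimately show "\<exists>u. (\<forall>t. poly_over V (u t)) \<and> p - (\<Sum>t\<in>V. u t * var t) \<in> quad_ideal"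
      using u(2) by (intro exI[of _ "\<lambda>t. vec_of_coeffs 1 u [t]"]) simp
  qed
qed

lemma res_matrix_square_zero:
  assumes "c < card (basis (i + 1) V)"
  shows "(\<Sum>j<card (basis i V). res_matrix i r j * res_matrix (i + 1) j c) \<in> quad_ideal"
proof -
  have "(\<Sum>j<card (basis i V). res_matrix i r j * res_matrix (i + 1) j c)
      = lincomb (basis i V) (differential i V) (differential (Suc i) V (basis_enum (Suc i) c)) (basis_enum (i - 1) r)"
    unfolding sum_res_matrix[symmetric] by (simp add: res_matrix_def)
  also have "\<dots> \<in> quad_ideal"
    using differential_square_zero[of i, unfolded differential_square_zero_def cong_quad_zero_iff]
      basis_enum_in_basis[of c "Suc i"] assms by simp
  finally show ?thesis .
qed

lemma res_matrix_exact:
  assumes "1 \<le> i" and u: "\<forall>j<card (basis i V). poly_over V (u j)"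
    and cycle: "\<forall>r<card (basis (i - 1) V). (\<Sum>j<card (basis i V). res_matrix i r j * u j) \<in> quad_ideal"
  shows "\<exists>w. (\<forall>c<card (basis (i + 1) V). poly_over V (w c)) \<and>
    (\<forall>j<card (basis i V). u j - (\<Sum>c<card (basis (i + 1) V). res_matrix (i + 1) j c * w c) \<in> quad_ideal)"
proof -
  define y where "y = vec_of_coeffs i u"
  note lin = differential_linear[of i] and ex = differential_exact[OF assms(1)]
  have sum_y: "(\<Sum>j<card (basis i V). res_matrix i r j * u j) = lincomb (basis i V) (differential i V) y (basis_enum (i - 1) r)" for r
    unfolding sum_res_matrix[symmetric] y_def by (rule sum.cong) (simp_all add: vec_of_coeffs_basis_enum)
  have "lincomb (basis i V) (differential i V) y x \<in> quad_ideal" for x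
  proof (cases "x \<in> basis (i - 1) V")
    case True
    then obtain r where "r < card (basis (i - 1) V)" "x = basis_enum (i - 1) r"
      using bij_betw_basis_enum[of "i - 1"] by (auto simp: bij_betw_def)
    then show ?thesis using cycle sum_y by metis
  next
    case False
    then show ?thesis
      using lin unfolding differential_linear_def supp_in_def lincomb_def by simp
  qed
  moreover have "supp_in (basis i V) y" "poly_vec y"
    using u by (auto simp: y_def vec_of_coeffs_def supp_in_def intro: poly_vec_vec_of_coeffs)
  ultimately obtain z where z: "poly_vec z" "cong_quad y (lincomb (basis (Suc i) V) (differential (Suc i) V) z)"
    using ex unfolding differential_exact_def cong_quad_zero_iff by blast
  show ?thesis
  proof (intro exI[of _ "\<lambda>c. z (basis_enum (Suc i) c)"] conjI allI impI)
    show "poly_over V (z (basis_enum (Suc i) c))" for c using z(1) by (simp add: poly_vec_def)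
    fix j assume "j < card (basis i V)"
    then show "u j - (\<Sum>c<card (basis (i + 1) V). res_matrix (i + 1) j c * z (basis_enum (Suc i) c)) \<in> quad_ideal"
      using z(2)[unfolded cong_quad_def, rule_format, of "basis_enum i j"] sum_res_matrix[of "Suc i" j z]
      by (simp add: y_def vec_of_coeffs_basis_enum)
  qed
qed

theorem koszul_quotient_quad_ideal: "koszul_quotient V quad_ideal"
  unfolding koszul_quotient_def
  using res_matrix_linear res_augmentation_exact res_matrix_square_zero res_matrix_exact
  by (intro exI[of _ "\<lambda>i. card (basis i V)"] exI[of _ res_matrix]) (simp add: Suc_le_eq)

end

theorem koszul_quotient_quadratic_monomials:
  assumes "finite V"
  shows "koszul_quotient V (gen_ideal V {var x * var y | x y. x \<in> V \<and> y \<in> V \<and> E x y} :: ('v, 'k::comm_ring_1) mpoly set)"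
proof -
  obtain rank :: "'v \<Rightarrow> nat" where "inj_on rank V"
    using finite_imp_inj_to_nat_seg[OF assms] by blast
  then interpret quadratic_monomial_ideal V E rank "TYPE('k)"
    using assms by unfold_locales
  show ?thesis using koszul_quotient_quad_ideal unfolding quad_gens_def .
qed

theorem mainTheorem15:
  fixes n :: nat
  assumes "n \<ge> 3"
  shows "preWDVV_koszul TYPE('k::field_char_0) n"
proof -
  have "finite (P n)"
    by (rule finite_subset[of _ "Pow (Pow {1..n})"]) (auto simp: P_def)
  then show ?thesis
    unfolding preWDVV_koszul_def J_def by (rule koszul_quotient_quadratic_monomials)
qed

end
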